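(* Under the setup, the window-coverage condition and nonsingular Gram matrix described in the context, and the DDD parallel changes-in-trends assumption, the population coefficient $\alpha_j$ ($j\in\mathcal E$) in the regression $$Y_{i,t}=\alpha_i+\delta_{S_i,t}+\eta_{Q_i,t}+\sum_{e\in\mathcal E}\alpha_eR_e(i,t)+\varepsilon_{i,t}$$ satisfies $$\alpha_j=\sum_{g\in\mathcal G_{\mathrm{trg}}}\sum_{\ell\in\{-L,\dots,K\}\setminus\{-1\}}\omega^{j,\star}_{g,\ell}\,\mathrm{CATT}(g,\ell).$$
   Context: Setup: balanced panel of units $i$ over $t\in\{1,\dots,T\}$; treatment-enabling group $S_i\in\mathcal S\subseteq\{2,\dots,T\}\cup\{\infty\}$; time-invariant eligibility $Q_i\in\{0,1\}$; $\mathcal G_{\mathrm{trg}}=\mathcal S\setminus\{\infty\}$. Potential outcomes $Y_{i,t}(g)$, $g\in\mathcal G_{\mathrm{trg}}$, and $Y_{i,t}(\infty)$, with convention $Y_{i,t}(g)=Y_{i,t}(\infty)$ for $t<g$. Observed outcome: $Y_{i,t}=Y_{i,t}(g)$ if $S_i=g\in\mathcal G_{\mathrm{trg}}$ and $Q_i=1$, and $Y_{i,t}=Y_{i,t}(\infty)$ otherwise. Data i.i.d. across units with finite second moments. $\mathrm{CATT}(g,e)=\mathbb E[Y_{i,g+e}(g)-Y_{i,g+e}(\infty)\mid S_i=g,Q_i=1]$. $\mathcal E=\{-L,\dots,K\}\setminus\{-1\}$; the window covers all event times ($t-g\in\{-L,\dots,K\}$ for all $g\in\mathcal G_{\mathrm{trg}}$,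 $t\in\{1,\dots,T\}$). $R_e(i,t)=\mathbb 1\{t-S_i=e\}Q_i$, $R_{g,\ell}(i,t)=\mathbb 1\{S_i=g,Q_i=1,t=g+\ell\}$. Population coefficients are least-squares projections over units and periods; the Gram matrix of the three-way demeaned (unit, group-by-time, eligibility-by-time) event-time indicators is nonsingular. $\omega^{j,\star}_{g,\ell}$ is the coefficient on $R_j$ in the population regression of $R_{g,\ell}(i,t)$ on $\alpha_i$, $\delta_{S_i,t}$, $\eta_{Q_i,t}$ and $\{R_e\}_{e\in\mathcal E}$. DDD-PCT: for all $g\in\mathcal G_{\mathrm{trg}}$, all $g_c\in\mathcal S$ with $g_c>g$, and all $t\in\{2,\dots,T\}$ with $t\le g_c$, writing $\Delta_t(s,q)=\mathbb E[Y_{i,t}(\infty)-Y_{i,t-1}(\infty)\mid S_i=s,Q_i=q]$, one has $\Delta_t(g,1)-\Delta_t(g,0)=\Delta_t(g_c,1)-\Delta_t(g_c,0)$. *)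

theory Defs
  imports "HOL-Probability.Probability" "HOL-Library.Extended_Nat"
begin

text \<open>One generic unit: a probability space M; S = treatment-enabling group
(enat, with \<infinity> meaning never enabled), Q = eligibility, Yinf = Y(\<infinity>),
Yg g = Y(g). Times are naturals 1..T.\<close>

definition ev_set :: "nat \<Rightarrow> nat \<Rightarrow> int set" where
  "ev_set L K = {- int L .. int K} - {-1}"

definition trg_groups :: "enat set \<Rightarrow> nat set" where
  "trg_groups SS = {g. enat g \<in> SS}"

definition Yobs :: "enat set \<Rightarrow> ('a \<Rightarrow> enat) \<Rightarrow> ('a \<Rightarrow> bool)
    \<Rightarrow> ('a \<Rightarrow> nat \<Rightarrow> real) \<Rightarrow> (nat \<Rightarrow> 'a \<Rightarrow> nat \<Rightarrow> real) \<Rightarrow> 'a \<Rightarrow> nat \<Rightarrow> real" where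
  "Yobs SS S Q Yinf Yg \<omega> t =
     (if (\<exists>g. S \<omega> = enat g \<and> g \<in> trg_groups SS) \<and> Q \<omega>
      then Yg (the_enat (S \<omega>)) \<omega> t else Yinf \<omega> t)"

definition Rev :: "('a \<Rightarrow> enat) \<Rightarrow> ('a \<Rightarrow> bool) \<Rightarrow> int \<Rightarrow> 'a \<Rightarrow> nat \<Rightarrow> real" where
  "Rev S Q e \<omega> t =
     (if (\<exists>g. S \<omega> = enat g \<and> int t - int g = e) \<and> Q \<omega> then 1 else 0)"

definition Rgl :: "('a \<Rightarrow> enat) \<Rightarrow> ('a \<Rightarrow> bool) \<Rightarrow> nat \<Rightarrow> int \<Rightarrow> 'a \<Rightarrow> nat \<Rightarrow> real" where
  "Rgl S Q g l \<omega> t = (if S \<omega> = enat g \<and> Q \<omega> \<and> int t = int g + l then 1 else 0)"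

definition ssr_full :: "'a measure \<Rightarrow> nat \<Rightarrow> int set \<Rightarrow> ('a \<Rightarrow> enat) \<Rightarrow> ('a \<Rightarrow> bool)
    \<Rightarrow> ('a \<Rightarrow> nat \<Rightarrow> real) \<Rightarrow> ('a \<Rightarrow> real) \<Rightarrow> (enat \<Rightarrow> nat \<Rightarrow> real)
    \<Rightarrow> (bool \<Rightarrow> nat \<Rightarrow> real) \<Rightarrow> (int \<Rightarrow> real) \<Rightarrow> ennreal" where
  "ssr_full M T E S Q X A d h b =
     (\<integral>\<^sup>+ \<omega>. ennreal (\<Sum>t\<in>{1..T}. (X \<omega> t - A \<omega> - d (S \<omega>) t - h (Q \<omega>) t
                   - (\<Sum>e\<in>E. b e * Rev S Q e \<omega> t))\<^sup>2) \<partial>M)"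

definition pop_coef :: "'a measure \<Rightarrow> nat \<Rightarrow> int set \<Rightarrow> ('a \<Rightarrow> enat) \<Rightarrow> ('a \<Rightarrow> bool)
    \<Rightarrow> ('a \<Rightarrow> nat \<Rightarrow> real) \<Rightarrow> (int \<Rightarrow> real) \<Rightarrow> bool" where
  "pop_coef M T E S Q X b \<longleftrightarrow>
     (\<exists>A d h. A \<in> borel_measurable M \<and>
        (\<forall>A' d' h' b'. A' \<in> borel_measurable M \<longrightarrow>
           ssr_full M T E S Q X A d h b \<le> ssr_full M T E S Q X A' d' h' b'))"

definition fe_fit :: "'a measure \<Rightarrow> nat \<Rightarrow> ('a \<Rightarrow> enat) \<Rightarrow> ('a \<Rightarrow> bool)
    \<Rightarrow> ('a \<Rightarrow> nat \<Rightarrow> real) \<Rightarrow> ('a \<Rightarrow> nat \<Rightarrow> real) \<Rightarrow> bool" where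
  "fe_fit M T S Q X F \<longleftrightarrow>
     (\<exists>A d h. A \<in> borel_measurable M \<and>
        (\<forall>\<omega> t. F \<omega> t = A \<omega> + d (S \<omega>) t + h (Q \<omega>) t) \<and>
        (\<forall>A' d' h'. A' \<in> borel_measurable M \<longrightarrow>
           (\<integral>\<^sup>+ \<omega>. ennreal (\<Sum>t\<in>{1..T}. (X \<omega> t - F \<omega> t)\<^sup>2) \<partial>M)
           \<le> (\<integral>\<^sup>+ \<omega>. ennreal (\<Sum>t\<in>{1..T}. (X \<omega> t - A' \<omega> - d' (S \<omega>) t - h' (Q \<omega>) t)\<^sup>2) \<partial>M)))"

definition nonsingular_on :: "'i set \<Rightarrow> ('i \<Rightarrow> 'i \<Rightarrow> real) \<Rightarrow> bool" where
  "nonsingular_on I G \<longleftrightarrow>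
     (\<forall>c. (\<forall>i\<in>I. (\<Sum>j\<in>I. G i j * c j) = 0) \<longrightarrow> (\<forall>i\<in>I. c i = 0))"

definition cond_mean :: "'a measure \<Rightarrow> ('a \<Rightarrow> bool) \<Rightarrow> ('a \<Rightarrow> real) \<Rightarrow> real" where
  "cond_mean M P Z = (\<integral>\<omega>. indicator {\<omega>. P \<omega>} \<omega> * Z \<omega> \<partial>M) / measure M {\<omega>\<in>space M. P \<omega>}"

definition CATT :: "'a measure \<Rightarrow> ('a \<Rightarrow> enat) \<Rightarrow> ('a \<Rightarrow> bool)
    \<Rightarrow> ('a \<Rightarrow> nat \<Rightarrow> real) \<Rightarrow> (nat \<Rightarrow> 'a \<Rightarrow> nat \<Rightarrow> real) \<Rightarrow> nat \<Rightarrow> int \<Rightarrow> real" where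
  "CATT M S Q Yinf Yg g e =
     cond_mean M (\<lambda>\<omega>. S \<omega> = enat g \<and> Q \<omega>)
       (\<lambda>\<omega>. Yg g \<omega> (nat (int g + e)) - Yinf \<omega> (nat (int g + e)))"

definition Dtrend :: "'a measure \<Rightarrow> ('a \<Rightarrow> enat) \<Rightarrow> ('a \<Rightarrow> bool)
    \<Rightarrow> ('a \<Rightarrow> nat \<Rightarrow> real) \<Rightarrow> nat \<Rightarrow> enat \<Rightarrow> bool \<Rightarrow> real" where
  "Dtrend M S Q Yinf t s q =
     cond_mean M (\<lambda>\<omega>. S \<omega> = s \<and> Q \<omega> = q) (\<lambda>\<omega>. Yinf \<omega> t - Yinf \<omega> (t - 1))"

end

theory Submission
  imports Defs
begin

(*
  Every regressor except the unit effect is a function of the cell (S, Q) and of the period, so the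
  population regression is a least-squares problem over cells weighted by their probabilities.
  Its first-order conditions (Frisch-Waugh-Lovell) say: if r_e is the event-time indicator R_e
  residualised on the fixed effects, then E[sum_t r_e Y] = sum_e' alpha_e' K(e,e'), where K is the
  Gram matrix of the residualised indicators; likewise for the regressand R_{g,l} with omega_{g,l}.
  Nonsingularity of K forces a never-treated group to exist, and DDD-PCT against that group places
  the untreated cell means in the span of the fixed effects, where r_e annihilates them. Writing
  the observed outcome as Y(inf) plus the treatment effects of the treated eligible cells, and using
  CATT(g,-1) = 0 (no anticipation), gives E[sum_t r_e Y] = sum_{g,l} CATT(g,l) E[sum_t r_e R_{g,l}].
  Comparing the two expansions and inverting K yields the decomposition of alpha_j.
*)

section \<open>First-order conditions of least squares\<close>

lemma integrable_bounded_mult: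
  fixes f g :: "'a \<Rightarrow> real"
  assumes "integrable M f" "g \<in> borel_measurable M" "\<And>\<omega>. \<omega> \<in> space M \<Longrightarrow> \<bar>g \<omega>\<bar> \<le> B"
  shows "integrable M (\<lambda>\<omega>. g \<omega> * f \<omega>)"
proof (rule Bochner_Integration.integrable_bound[where f = "\<lambda>\<omega>. \<bar>B\<bar> * f \<omega>"])
  show "integrable M (\<lambda>\<omega>. \<bar>B\<bar> * f \<omega>)" using assms(1) by simp
  show "(\<lambda>\<omega>. g \<omega> * f \<omega>) \<in> borel_measurable M" using assms by measurable
  show "AE \<omega> in M. norm (g \<omega> * f \<omega>) \<le> norm (\<bar>B\<bar> * f \<omega>)"
    using assms(3) by (intro AE_I2) (force simp: abs_mult intro: mult_right_mono)
qed

lemma (in finite_measure) square_integrable_bounded: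
  fixes f :: "'a \<Rightarrow> real"
  assumes "f \<in> borel_measurable M" "\<And>\<omega>. \<omega> \<in> space M \<Longrightarrow> \<bar>f \<omega>\<bar> \<le> B"
  shows "integrable M (\<lambda>\<omega>. (f \<omega>)\<^sup>2)"
proof (rule integrable_const_bound[where B = "B\<^sup>2"])
  show "AE \<omega> in M. norm ((f \<omega>)\<^sup>2) \<le> B\<^sup>2"
  proof (rule AE_I2)
    fix \<omega> assume "\<omega> \<in> space M"
    then show "norm ((f \<omega>)\<^sup>2) \<le> B\<^sup>2"
      using power_mono[OF assms(2) abs_ge_zero, of \<omega> 2] by simp
  qed
qed (use assms(1) in measurable)

lemma integrable_mult_square_integrable:
  fixes f g :: "'a \<Rightarrow> real"
  assumes "f \<in> borel_measurable M" "g \<in> borel_measurable M"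
    and "integrable M (\<lambda>\<omega>. (f \<omega>)\<^sup>2)" "integrable M (\<lambda>\<omega>. (g \<omega>)\<^sup>2)"
  shows "integrable M (\<lambda>\<omega>. f \<omega> * g \<omega>)"
proof (rule Bochner_Integration.integrable_bound[where f = "\<lambda>\<omega>. (f \<omega>)\<^sup>2 + (g \<omega>)\<^sup>2"])
  show "integrable M (\<lambda>\<omega>. (f \<omega>)\<^sup>2 + (g \<omega>)\<^sup>2)" using assms(3,4) by simp
  show "(\<lambda>\<omega>. f \<omega> * g \<omega>) \<in> borel_measurable M" using assms(1,2) by measurable
  have "\<bar>x * y\<bar> \<le> x\<^sup>2 + y\<^sup>2" for x y :: real
  proof -
    have "2 * \<bar>x * y\<bar> \<le> x\<^sup>2 + y\<^sup>2"
      using sum_squares_bound[of "\<bar>x\<bar>" "\<bar>y\<bar>"] by (simp add: abs_mult mult.assoc)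
    then show ?thesis using abs_ge_zero[of "x * y"] by linarith
  qed
  then show "AE \<omega> in M. norm (f \<omega> * g \<omega>) \<le> norm ((f \<omega>)\<^sup>2 + (g \<omega>)\<^sup>2)" by simp
qed

lemma square_integrable_add:
  fixes f g :: "'a \<Rightarrow> real"
  assumes "f \<in> borel_measurable M" "g \<in> borel_measurable M"
    and "integrable M (\<lambda>\<omega>. (f \<omega>)\<^sup>2)" "integrable M (\<lambda>\<omega>. (g \<omega>)\<^sup>2)"
  shows "integrable M (\<lambda>\<omega>. (f \<omega> + g \<omega>)\<^sup>2)"
proof -
  have "integrable M (\<lambda>\<omega>. (f \<omega>)\<^sup>2 + (g \<omega>)\<^sup>2 + 2 * (f \<omega> * g \<omega>))"
    using integrable_mult_square_integrable[OF assms] assms(3,4) by auto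
  then show ?thesis by (simp add: power2_sum mult.assoc)
qed

lemma linear_coeff_zero_if_quadratic_nonneg:
  fixes a b :: real
  assumes "b \<ge> 0" "\<And>\<epsilon>. 0 \<le> \<epsilon>\<^sup>2 * b - 2 * \<epsilon> * a"
  shows "a = 0"
proof -
  have "0 \<le> (b + 1)\<^sup>2 * ((a / (b + 1))\<^sup>2 * b - 2 * (a / (b + 1)) * a)"
    using assms(2)[of "a / (b + 1)"] by (intro mult_nonneg_nonneg) simp_all
  also have "\<dots> = - (a\<^sup>2 * (b + 2))"
    using assms(1) by (simp add: divide_simps power2_eq_square) (simp add: algebra_simps)
  finally have "a\<^sup>2 * (b + 2) \<le> 0" by simp
  then show ?thesis
    using assms(1) by (smt (verit) mult_pos_pos zero_less_power2)
qed

lemma least_squares_orthogonal: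
  fixes Z v :: "'a \<Rightarrow> 'i \<Rightarrow> real"
  assumes "finite I"
    and Z_meas: "\<And>t. t \<in> I \<Longrightarrow> (\<lambda>\<omega>. Z \<omega> t) \<in> borel_measurable M"
    and Z_L2: "\<And>t. t \<in> I \<Longrightarrow> integrable M (\<lambda>\<omega>. (Z \<omega> t)\<^sup>2)"
    and v_meas: "\<And>t. t \<in> I \<Longrightarrow> (\<lambda>\<omega>. v \<omega> t) \<in> borel_measurable M"
    and v_L2: "\<And>t. t \<in> I \<Longrightarrow> integrable M (\<lambda>\<omega>. (v \<omega> t)\<^sup>2)"
    and min: "\<And>\<epsilon>. (\<integral>\<^sup>+\<omega>. ennreal (\<Sum>t\<in>I. (Z \<omega> t)\<^sup>2) \<partial>M)
                \<le> (\<integral>\<^sup>+\<omega>. ennreal (\<Sum>t\<in>I. (Z \<omega> t - \<epsilon> * v \<omega> t)\<^sup>2) \<partial>M)"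
  shows "(\<integral>\<omega>. (\<Sum>t\<in>I. Z \<omega> t * v \<omega> t) \<partial>M) = 0"
proof -
  define a where "a = (\<integral>\<omega>. (\<Sum>t\<in>I. Z \<omega> t * v \<omega> t) \<partial>M)"
  define b where "b = (\<integral>\<omega>. (\<Sum>t\<in>I. (v \<omega> t)\<^sup>2) \<partial>M)"
  define c where "c = (\<integral>\<omega>. (\<Sum>t\<in>I. (Z \<omega> t)\<^sup>2) \<partial>M)"
  have int_Zv: "integrable M (\<lambda>\<omega>. \<Sum>t\<in>I. Z \<omega> t * v \<omega> t)"
    using integrable_mult_square_integrable[OF Z_meas v_meas Z_L2 v_L2] by auto
  have int_v2: "integrable M (\<lambda>\<omega>. \<Sum>t\<in>I. (v \<omega> t)\<^sup>2)" using v_L2 by auto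
  have int_Z2: "integrable M (\<lambda>\<omega>. \<Sum>t\<in>I. (Z \<omega> t)\<^sup>2)" using Z_L2 by auto
  have "0 \<le> \<epsilon>\<^sup>2 * b - 2 * \<epsilon> * a" for \<epsilon>
  proof -
    have expand: "(\<Sum>t\<in>I. (Z \<omega> t - \<epsilon> * v \<omega> t)\<^sup>2) =
        (\<Sum>t\<in>I. (Z \<omega> t)\<^sup>2) - 2 * \<epsilon> * (\<Sum>t\<in>I. Z \<omega> t * v \<omega> t) + \<epsilon>\<^sup>2 * (\<Sum>t\<in>I. (v \<omega> t)\<^sup>2)" for \<omega>
      by (simp add: power2_diff sum.distrib sum_subtractf sum_distrib_left algebra_simps power2_eq_square)
    have "integrable M (\<lambda>\<omega>. \<Sum>t\<in>I. (Z \<omega> t - \<epsilon> * v \<omega> t)\<^sup>2)"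
      unfolding expand using int_Zv int_v2 int_Z2 by auto
    then have "(\<integral>\<^sup>+\<omega>. ennreal (\<Sum>t\<in>I. (Z \<omega> t - \<epsilon> * v \<omega> t)\<^sup>2) \<partial>M)
        = ennreal (\<integral>\<omega>. (\<Sum>t\<in>I. (Z \<omega> t - \<epsilon> * v \<omega> t)\<^sup>2) \<partial>M)"
      by (intro nn_integral_eq_integral) (auto intro!: sum_nonneg)
    also have integral_expand: "(\<integral>\<omega>. (\<Sum>t\<in>I. (Z \<omega> t - \<epsilon> * v \<omega> t)\<^sup>2) \<partial>M) = c - 2 * \<epsilon> * a + \<epsilon>\<^sup>2 * b"
      unfolding expand a_def b_def c_def using int_Zv int_v2 int_Z2 by simp
    finally have "ennreal c \<le> ennreal (c - 2 * \<epsilon> * a + \<epsilon>\<^sup>2 * b)"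
      using min[of \<epsilon>] int_Z2 unfolding c_def
      by (subst (asm) nn_integral_eq_integral) (auto intro!: sum_nonneg)
    moreover have "0 \<le> c - 2 * \<epsilon> * a + \<epsilon>\<^sup>2 * b"
      using integral_expand[symmetric]
      by (simp add: integral_nonneg_AE sum_nonneg)
    ultimately show ?thesis by (simp add: ennreal_le_iff)
  qed
  moreover have "b \<ge> 0" unfolding b_def by (intro integral_nonneg_AE) (auto intro!: sum_nonneg)
  ultimately show ?thesis
    using linear_coeff_zero_if_quadratic_nonneg unfolding a_def by blast
qed

section \<open>Event times and cell-level indicators\<close>

lemma finite_ev_set: "finite (ev_set L K)"
  by (simp add: ev_set_def)

lemma finite_trg_groups: "finite SS \<Longrightarrow> finite (trg_groups SS)"
  using finite_vimageI[of SS enat] by (simp add: trg_groups_def vimage_def inj_on_def)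

lemma nonsingular_on_cong:
  assumes "\<And>i j. i \<in> I \<Longrightarrow> j \<in> I \<Longrightarrow> G i j = G' i j"
  shows "nonsingular_on I G \<longleftrightarrow> nonsingular_on I G'"
proof -
  have "(\<Sum>j\<in>I. G i j * c j) = (\<Sum>j\<in>I. G' i j * c j)" if "i \<in> I" for i c
    using that assms by (intro sum.cong) auto
  then show ?thesis unfolding nonsingular_on_def by auto
qed

lemma nonsingular_on_imp_eq:
  assumes ns: "nonsingular_on E G" and "e \<in> E"
    and eq: "\<And>e. e \<in> E \<Longrightarrow> (\<Sum>e'\<in>E. x e' * G e e') = (\<Sum>i\<in>I. \<Sum>k\<in>J. c i k * (\<Sum>e'\<in>E. y i k e' * G e e'))"
  shows "x e = (\<Sum>i\<in>I. \<Sum>k\<in>J. c i k * y i k e)"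
proof -
  define z where "z e' = x e' - (\<Sum>i\<in>I. \<Sum>k\<in>J. c i k * y i k e')" for e'
  have "(\<Sum>e'\<in>E. G e e' * z e') = 0" if e: "e \<in> E" for e
  proof -
    have "(\<Sum>e'\<in>E. G e e' * z e')
        = (\<Sum>e'\<in>E. x e' * G e e') - (\<Sum>e'\<in>E. \<Sum>i\<in>I. \<Sum>k\<in>J. c i k * (y i k e' * G e e'))"
      by (simp add: z_def algebra_simps sum_subtractf sum_distrib_left sum_distrib_right)
    also have "(\<Sum>e'\<in>E. \<Sum>i\<in>I. \<Sum>k\<in>J. c i k * (y i k e' * G e e'))
        = (\<Sum>i\<in>I. \<Sum>k\<in>J. c i k * (\<Sum>e'\<in>E. y i k e' * G e e'))"
      by (subst sum.swap, rule sum.cong[OF refl], subst sum.swap) (simp add: sum_distrib_left)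
    finally show ?thesis using eq[OF e] by simp
  qed
  with ns have "\<forall>e'\<in>E. z e' = 0" unfolding nonsingular_on_def by blast
  then show ?thesis using \<open>e \<in> E\<close> by (simp add: z_def)
qed

definition Rev_cell :: "int \<Rightarrow> enat \<Rightarrow> bool \<Rightarrow> nat \<Rightarrow> real" where
  "Rev_cell e s q t = (if (\<exists>g. s = enat g \<and> int t - int g = e) \<and> q then 1 else 0)"

lemma Rev_eq_Rev_cell: "Rev S Q e \<omega> t = Rev_cell e (S \<omega>) (Q \<omega>) t"
  by (simp add: Rev_def Rev_cell_def)

definition Rgl_cell :: "nat \<Rightarrow> int \<Rightarrow> enat \<Rightarrow> bool \<Rightarrow> nat \<Rightarrow> real" where
  "Rgl_cell g l s q t = (if s = enat g \<and> q \<and> int t = int g + l then 1 else 0)"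

lemma Rgl_eq_Rgl_cell: "Rgl S Q g l \<omega> t = Rgl_cell g l (S \<omega>) (Q \<omega>) t"
  by (simp add: Rgl_def Rgl_cell_def)

definition time_demean :: "nat \<Rightarrow> (enat \<Rightarrow> bool \<Rightarrow> nat \<Rightarrow> real) \<Rightarrow> enat \<Rightarrow> bool \<Rightarrow> nat \<Rightarrow> real" where
  "time_demean T u s q t = u s q t - (\<Sum>t'\<in>{1..T}. u s q t') / real T"

lemma sum_time_demean: "(\<Sum>t\<in>{1..T}. time_demean T u s q t) = 0"
  by (cases "T = 0") (simp_all add: time_demean_def sum_subtractf)

lemma eq_first_if_consecutive_eq:
  fixes f :: "nat \<Rightarrow> 'b"
  assumes step: "\<And>t. t \<in> {2..n} \<Longrightarrow> f t = f (t - 1)" and "t \<in> {1..n}"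
  shows "f t = f 1"
  using assms(2)
proof (induction t)
  case (Suc t)
  show ?case
  proof (cases "t = 0")
    case False
    then have "f (Suc t) = f t" using step[of "Suc t"] Suc.prems by simp
    then show ?thesis using Suc False by simp
  qed simp
qed simp

lemma CATT_eq_0_before_treatment:
  assumes "\<And>\<omega> t. \<omega> \<in> space M \<Longrightarrow> 1 \<le> t \<and> t < g \<Longrightarrow> Yg g \<omega> t = Yinf \<omega> t"
    and "l < 0" "1 \<le> int g + l"
  shows "CATT M S Q Yinf Yg g l = 0"
proof -
  have "Yg g \<omega> (nat (int g + l)) = Yinf \<omega> (nat (int g + l))" if "\<omega> \<in> space M" for \<omega>
    using assms(2,3) by (intro assms(1)[OF that]) auto
  then have "(\<integral>\<omega>. indicator {\<omega>. S \<omega> = enat g \<and> Q \<omega>} \<omega> * (Yg g \<omega> (nat (int g + l)) - Yinf \<omega> (nat (int g + l))) \<partial>M)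
      = (\<integral>\<omega>. 0 \<partial>M)"
    by (intro Bochner_Integration.integral_cong) auto
  then show ?thesis by (simp add: CATT_def cond_mean_def)
qed

lemma sum_event_times_CATT:
  assumes no_anticipation: "\<And>\<omega> t. \<omega> \<in> space M \<Longrightarrow> 1 \<le> t \<and> t < g \<Longrightarrow> Yg g \<omega> t = Yinf \<omega> t"
    and window: "\<And>t. t \<in> {1..T} \<Longrightarrow> - int L \<le> int t - int g \<and> int t - int g \<le> int K"
  shows "(\<Sum>l\<in>ev_set L K. CATT M S Q Yinf Yg g l * (\<Sum>t\<in>{1..T}. x t * (if int t = int g + l then 1 else 0)))
    = (\<Sum>t\<in>{1..T}. x t * CATT M S Q Yinf Yg g (int t - int g))"
proof -
  \<comment> \<open>The only event time in the window outside \<open>ev_set L K\<close> is the reference period \<open>-1\<close>.\<close>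
  have CATT_outside: "(if int t - int g \<in> ev_set L K then CATT M S Q Yinf Yg g (int t - int g) else 0)
      = CATT M S Q Yinf Yg g (int t - int g)" if t: "t \<in> {1..T}" for t
  proof (cases "int t - int g \<in> ev_set L K")
    case False
    then have "int t - int g = -1" using window[OF t] by (auto simp: ev_set_def)
    then have "CATT M S Q Yinf Yg g (int t - int g) = 0"
      using t by (intro CATT_eq_0_before_treatment[where Yg = Yg and Yinf = Yinf, OF no_anticipation]) auto
    then show ?thesis by simp
  qed simp
  have "(\<Sum>l\<in>ev_set L K. CATT M S Q Yinf Yg g l * (\<Sum>t\<in>{1..T}. x t * (if int t = int g + l then 1 else 0)))
      = (\<Sum>l\<in>ev_set L K. \<Sum>t\<in>{1..T}. x t * (if l = int t - int g then CATT M S Q Yinf Yg g l else 0))"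
    by (auto simp: sum_distrib_left intro!: sum.cong)
  also have "\<dots> = (\<Sum>t\<in>{1..T}. \<Sum>l\<in>ev_set L K. x t * (if l = int t - int g then CATT M S Q Yinf Yg g l else 0))"
    by (rule sum.swap)
  also have "\<dots> = (\<Sum>t\<in>{1..T}. x t * (if int t - int g \<in> ev_set L K then CATT M S Q Yinf Yg g (int t - int g) else 0))"
    by (simp add: finite_ev_set flip: sum_distrib_left)
  also have "\<dots> = (\<Sum>t\<in>{1..T}. x t * CATT M S Q Yinf Yg g (int t - int g))"
    using CATT_outside by simp
  finally show ?thesis .
qed

section \<open>Functions of the cell\<close>

locale cell_design = prob_space M for M :: "'a measure" +
  fixes T :: nat and SS :: "enat set" and S :: "'a \<Rightarrow> enat" and Q :: "'a \<Rightarrow> bool"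
  assumes finite_SS: "finite SS"
    and measurable_S [measurable]: "S \<in> measurable M (count_space UNIV)"
    and measurable_Q [measurable]: "Q \<in> measurable M (count_space UNIV)"
    and S_in_SS: "\<And>\<omega>. \<omega> \<in> space M \<Longrightarrow> S \<omega> \<in> SS"
begin

definition cell :: "enat \<Rightarrow> bool \<Rightarrow> 'a set" where
  "cell s q = {\<omega> \<in> space M. S \<omega> = s \<and> Q \<omega> = q}"

definition cell_prob :: "enat \<Rightarrow> bool \<Rightarrow> real" where
  "cell_prob s q = measure M (cell s q)"

definition cell_moment :: "('a \<Rightarrow> real) \<Rightarrow> enat \<Rightarrow> bool \<Rightarrow> real" where
  "cell_moment Y s q = (\<integral>\<omega>. indicator (cell s q) \<omega> * Y \<omega> \<partial>M)"

lemma sets_cell [measurable]: "cell s q \<in> sets M"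
  unfolding cell_def by measurable

lemma borel_measurable_cell_function [measurable]:
  "(\<lambda>\<omega>. f (S \<omega>) (Q \<omega>) :: real) \<in> borel_measurable M"
  by (rule measurable_compose_countable[where f = "\<lambda>s \<omega>. f s (Q \<omega>)", OF _ measurable_S],
      rule measurable_compose_countable[where f = "\<lambda>q \<omega>. f _ q", OF _ measurable_Q]) simp

lemma cell_function_bounded:
  assumes "\<omega> \<in> space M"
  shows "\<bar>f (S \<omega>) (Q \<omega>) :: real\<bar> \<le> (\<Sum>s\<in>SS. \<Sum>q\<in>UNIV. \<bar>f s q\<bar>)"
proof -
  have "\<bar>f (S \<omega>) (Q \<omega>)\<bar> \<le> (\<Sum>q\<in>UNIV. \<bar>f (S \<omega>) q\<bar>)"
    by (rule member_le_sum) auto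
  also have "\<dots> \<le> (\<Sum>s\<in>SS. \<Sum>q\<in>UNIV. \<bar>f s q\<bar>)"
    using S_in_SS[OF assms] finite_SS by (intro member_le_sum) (auto intro: sum_nonneg)
  finally show ?thesis .
qed

lemma integrable_cell_function_mult:
  fixes Y :: "'a \<Rightarrow> real"
  assumes "integrable M Y"
  shows "integrable M (\<lambda>\<omega>. f (S \<omega>) (Q \<omega>) * Y \<omega>)"
  by (rule integrable_bounded_mult[OF assms borel_measurable_cell_function cell_function_bounded])

lemma integrable_cell_function: "integrable M (\<lambda>\<omega>. f (S \<omega>) (Q \<omega>) :: real)"
  using integrable_cell_function_mult[OF integrable_const[of 1], of f] by simp

lemma square_integrable_cell_function: "integrable M (\<lambda>\<omega>. (f (S \<omega>) (Q \<omega>))\<^sup>2 :: real)"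
  using integrable_cell_function[of "\<lambda>s q. (f s q)\<^sup>2"] .

lemma integrable_indicator_cell_mult:
  fixes Y :: "'a \<Rightarrow> real"
  assumes "integrable M Y"
  shows "integrable M (\<lambda>\<omega>. indicator (cell s q) \<omega> * Y \<omega>)"
  using integrable_mult_indicator[OF sets_cell assms] by simp

lemma cell_moment_cell_function: "cell_moment (\<lambda>\<omega>. f (S \<omega>) (Q \<omega>)) s q = cell_prob s q * f s q"
proof -
  have "cell_moment (\<lambda>\<omega>. f (S \<omega>) (Q \<omega>)) s q = (\<integral>\<omega>. f s q * indicator (cell s q) \<omega> \<partial>M)"
    unfolding cell_moment_def
    by (intro Bochner_Integration.integral_cong) (auto simp: cell_def split: split_indicator)
  then show ?thesis by (simp add: cell_prob_def)
qed

lemma cell_function_eq_sum: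
  fixes f :: "enat \<Rightarrow> bool \<Rightarrow> real"
  assumes "\<omega> \<in> space M"
  shows "f (S \<omega>) (Q \<omega>) = (\<Sum>s\<in>SS. \<Sum>q\<in>UNIV. f s q * indicator (cell s q) \<omega>)"
proof -
  have "(\<Sum>q\<in>UNIV. f s q * indicator (cell s q) \<omega>) = (if s = S \<omega> then f s (Q \<omega>) else 0)" for s
    using assms by (cases "Q \<omega>") (auto simp: indicator_def UNIV_bool cell_def)
  then show ?thesis using S_in_SS[OF assms] finite_SS by (simp add: sum.delta')
qed

lemma integral_cell_function_mult:
  fixes Y :: "'a \<Rightarrow> real"
  assumes "integrable M Y"
  shows "(\<integral>\<omega>. f (S \<omega>) (Q \<omega>) * Y \<omega> \<partial>M) = (\<Sum>s\<in>SS. \<Sum>q\<in>UNIV. f s q * cell_moment Y s q)"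
proof -
  have "(\<integral>\<omega>. f (S \<omega>) (Q \<omega>) * Y \<omega> \<partial>M) =
      (\<integral>\<omega>. (\<Sum>s\<in>SS. \<Sum>q\<in>UNIV. f s q * (indicator (cell s q) \<omega> * Y \<omega>)) \<partial>M)"
  proof (intro Bochner_Integration.integral_cong refl)
    fix \<omega> assume "\<omega> \<in> space M"
    then show "f (S \<omega>) (Q \<omega>) * Y \<omega> = (\<Sum>s\<in>SS. \<Sum>q\<in>UNIV. f s q * (indicator (cell s q) \<omega> * Y \<omega>))"
      by (subst cell_function_eq_sum[of _ f]) (simp_all only: sum_distrib_right mult.assoc)
  qed
  also have "\<dots> = (\<Sum>s\<in>SS. \<Sum>q\<in>UNIV. f s q * cell_moment Y s q)"
    using integrable_mult_indicator[OF sets_cell assms]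
    by (simp add: integral_sum cell_moment_def)
  finally show ?thesis .
qed

lemma cond_mean_cell: "cond_mean M (\<lambda>\<omega>. S \<omega> = s \<and> Q \<omega> = q) Z = cell_moment Z s q / cell_prob s q"
  unfolding cond_mean_def cell_moment_def cell_prob_def cell_def
  by (intro arg_cong2[where f = "(/)"] Bochner_Integration.integral_cong) (auto split: split_indicator)

definition cell_inner :: "(enat \<Rightarrow> bool \<Rightarrow> nat \<Rightarrow> real) \<Rightarrow> (enat \<Rightarrow> bool \<Rightarrow> nat \<Rightarrow> real) \<Rightarrow> real" where
  "cell_inner u v = (\<Sum>s\<in>SS. \<Sum>q\<in>UNIV. cell_prob s q * (\<Sum>t\<in>{1..T}. u s q t * v s q t))"

lemma cell_inner_commute: "cell_inner u v = cell_inner v u"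
  by (simp add: cell_inner_def mult.commute)

lemma cell_inner_add_right:
  "cell_inner u (\<lambda>s q t. v s q t + w s q t) = cell_inner u v + cell_inner u w"
  by (simp add: cell_inner_def distrib_left sum.distrib)

lemma cell_inner_diff_right:
  "cell_inner u (\<lambda>s q t. v s q t - w s q t) = cell_inner u v - cell_inner u w"
  by (simp add: cell_inner_def right_diff_distrib sum_subtractf)

lemma cell_inner_sum_right:
  "cell_inner u (\<lambda>s q t. \<Sum>i\<in>I. c i * v i s q t) = (\<Sum>i\<in>I. c i * cell_inner u (v i))"
proof -
  have "cell_prob s q * (\<Sum>t\<in>{1..T}. u s q t * (\<Sum>i\<in>I. c i * v i s q t))
      = (\<Sum>i\<in>I. c i * (cell_prob s q * (\<Sum>t\<in>{1..T}. u s q t * v i s q t)))" for s q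
    unfolding sum_distrib_left by (subst sum.swap) (simp add: mult_ac)
  then have "cell_inner u (\<lambda>s q t. \<Sum>i\<in>I. c i * v i s q t)
      = (\<Sum>s\<in>SS. \<Sum>q\<in>UNIV. \<Sum>i\<in>I. c i * (cell_prob s q * (\<Sum>t\<in>{1..T}. u s q t * v i s q t)))"
    by (simp add: cell_inner_def)
  also have "\<dots> = (\<Sum>s\<in>SS. \<Sum>i\<in>I. \<Sum>q\<in>UNIV. c i * (cell_prob s q * (\<Sum>t\<in>{1..T}. u s q t * v i s q t)))"
    by (rule sum.cong[OF refl], rule sum.swap)
  also have "\<dots> = (\<Sum>i\<in>I. c i * cell_inner u (v i))"
    by (subst sum.swap) (simp add: cell_inner_def sum_distrib_left)
  finally show ?thesis .
qed

lemma integral_cell_function_times: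
  assumes "\<And>t. t \<in> {1..T} \<Longrightarrow> integrable M (\<lambda>\<omega>. Y \<omega> t)"
    and "\<And>s q t. s \<in> SS \<Longrightarrow> t \<in> {1..T} \<Longrightarrow> cell_moment (\<lambda>\<omega>. Y \<omega> t) s q = cell_prob s q * y s q t"
  shows "(\<integral>\<omega>. (\<Sum>t\<in>{1..T}. r (S \<omega>) (Q \<omega>) t * Y \<omega> t) \<partial>M) = cell_inner r y"
proof -
  have "(\<integral>\<omega>. (\<Sum>t\<in>{1..T}. r (S \<omega>) (Q \<omega>) t * Y \<omega> t) \<partial>M)
      = (\<Sum>t\<in>{1..T}. \<integral>\<omega>. r (S \<omega>) (Q \<omega>) t * Y \<omega> t \<partial>M)"
    by (intro Bochner_Integration.integral_sum integrable_cell_function_mult assms(1))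
  also have "\<dots> = (\<Sum>t\<in>{1..T}. \<Sum>s\<in>SS. \<Sum>q\<in>UNIV. r s q t * (cell_prob s q * y s q t))"
  proof (rule sum.cong[OF refl])
    fix t assume t: "t \<in> {1..T}"
    show "(\<integral>\<omega>. r (S \<omega>) (Q \<omega>) t * Y \<omega> t \<partial>M)
        = (\<Sum>s\<in>SS. \<Sum>q\<in>UNIV. r s q t * (cell_prob s q * y s q t))"
      using integral_cell_function_mult[OF assms(1)[OF t], of "\<lambda>s q. r s q t"] assms(2)[OF _ t]
      by simp
  qed
  also have "\<dots> = (\<Sum>s\<in>SS. \<Sum>t\<in>{1..T}. \<Sum>q\<in>UNIV. r s q t * (cell_prob s q * y s q t))"
    by (rule sum.swap)
  also have "\<dots> = (\<Sum>s\<in>SS. \<Sum>q\<in>UNIV. \<Sum>t\<in>{1..T}. r s q t * (cell_prob s q * y s q t))"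
    by (rule sum.cong[OF refl], rule sum.swap)
  also have "\<dots> = cell_inner r y"
    by (simp add: cell_inner_def sum_distrib_left mult_ac)
  finally show ?thesis .
qed

lemma integral_cell_inner:
  "(\<integral>\<omega>. (\<Sum>t\<in>{1..T}. u (S \<omega>) (Q \<omega>) t * v (S \<omega>) (Q \<omega>) t) \<partial>M) = cell_inner u v"
proof (rule integral_cell_function_times)
  fix s q t
  show "integrable M (\<lambda>\<omega>. v (S \<omega>) (Q \<omega>) t)"
    using integrable_cell_function[of "\<lambda>s q. v s q t"] .
  show "cell_moment (\<lambda>\<omega>. v (S \<omega>) (Q \<omega>) t) s q = cell_prob s q * v s q t"
    using cell_moment_cell_function[of "\<lambda>s q. v s q t"] .
qed

(* The unit-effect condition is imposed in every cell, as unit effects are arbitrary functions of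
   the unit. *)
definition fe_orthogonal :: "(enat \<Rightarrow> bool \<Rightarrow> nat \<Rightarrow> real) \<Rightarrow> bool" where
  "fe_orthogonal r \<longleftrightarrow> (\<forall>s q. (\<Sum>t\<in>{1..T}. r s q t) = 0) \<and>
     (\<forall>\<delta>. cell_inner r (\<lambda>s q t. \<delta> s t) = 0) \<and> (\<forall>\<eta>. cell_inner r (\<lambda>s q t. \<eta> q t) = 0)"

lemma cell_inner_fe_span:
  assumes "fe_orthogonal r"
    and "\<And>s q t. s \<in> SS \<Longrightarrow> t \<in> {1..T} \<Longrightarrow> u s q t = \<delta> s t + \<eta> q t + a s q"
  shows "cell_inner r u = 0"
proof -
  have "cell_inner r u = (\<Sum>s\<in>SS. \<Sum>q\<in>UNIV. cell_prob s q *
      (\<Sum>t\<in>{1..T}. r s q t * \<delta> s t + r s q t * \<eta> q t + a s q * r s q t))"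
    unfolding cell_inner_def
    by (intro sum.cong refl arg_cong2[where f = "(*)"]) (simp add: assms(2) algebra_simps)
  also have "\<dots> = cell_inner r (\<lambda>s q t. \<delta> s t) + cell_inner r (\<lambda>s q t. \<eta> q t)
      + (\<Sum>s\<in>SS. \<Sum>q\<in>UNIV. cell_prob s q * a s q * (\<Sum>t\<in>{1..T}. r s q t))"
    by (simp add: cell_inner_def sum.distrib distrib_left sum_distrib_left mult_ac)
  finally show ?thesis using assms(1) unfolding fe_orthogonal_def by simp
qed

definition fe_residual :: "int \<Rightarrow> (enat \<Rightarrow> bool \<Rightarrow> nat \<Rightarrow> real) \<Rightarrow> bool" where
  "fe_residual e r \<longleftrightarrow> fe_orthogonal r \<and>
     (\<exists>\<delta> \<eta> a. \<forall>s q t. r s q t = Rev_cell e s q t - \<delta> s t - \<eta> q t - a s q)"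

lemma cell_inner_fe_residual:
  assumes "fe_orthogonal r" "fe_residual e r'"
  shows "cell_inner r r' = cell_inner r (Rev_cell e)"
proof -
  obtain \<delta> \<eta> a where r': "\<And>s q t. r' s q t = Rev_cell e s q t - \<delta> s t - \<eta> q t - a s q"
    using assms(2) unfolding fe_residual_def by blast
  have "cell_inner r (\<lambda>s q t. Rev_cell e s q t - r' s q t) = 0"
    using assms(1) by (rule cell_inner_fe_span[where \<delta> = \<delta> and \<eta> = \<eta> and a = a]) (simp add: r')
  then show ?thesis by (simp add: cell_inner_diff_right)
qed

lemma borel_measurable_Rgl: "(\<lambda>\<omega>. Rgl S Q g l \<omega> t) \<in> borel_measurable M"
  unfolding Rgl_eq_Rgl_cell by (rule borel_measurable_cell_function)

lemma square_integrable_Rgl: "integrable M (\<lambda>\<omega>. (Rgl S Q g l \<omega> t)\<^sup>2)"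
  unfolding Rgl_eq_Rgl_cell by (rule square_integrable_cell_function)

lemma integral_Rgl:
  assumes "enat g \<in> SS"
  shows "(\<integral>\<omega>. (\<Sum>t\<in>{1..T}. r (S \<omega>) (Q \<omega>) t * Rgl S Q g l \<omega> t) \<partial>M)
    = cell_prob (enat g) True * (\<Sum>t\<in>{1..T}. r (enat g) True t * (if int t = int g + l then 1 else 0))"
proof -
  have "(\<integral>\<omega>. (\<Sum>t\<in>{1..T}. r (S \<omega>) (Q \<omega>) t * Rgl S Q g l \<omega> t) \<partial>M) = cell_inner r (Rgl_cell g l)"
    using integral_cell_inner[of r "Rgl_cell g l"] by (simp add: Rgl_eq_Rgl_cell)
  also have "\<dots> = (\<Sum>s\<in>SS. \<Sum>q\<in>UNIV. if s = enat g \<and> q then cell_prob (enat g) True *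
      (\<Sum>t\<in>{1..T}. r (enat g) True t * (if int t = int g + l then 1 else 0)) else 0)"
    unfolding cell_inner_def by (intro sum.cong refl) (auto simp: Rgl_cell_def)
  also have "\<dots> = cell_prob (enat g) True * (\<Sum>t\<in>{1..T}. r (enat g) True t * (if int t = int g + l then 1 else 0))"
    using assms finite_SS by (simp add: UNIV_bool sum.delta')
  finally show ?thesis .
qed

lemma Yobs_eq_sum:
  assumes \<omega>: "\<omega> \<in> space M"
  shows "Yobs SS S Q Yinf Yg \<omega> t
    = Yinf \<omega> t + (\<Sum>g\<in>trg_groups SS. indicator (cell (enat g) True) \<omega> * (Yg g \<omega> t - Yinf \<omega> t))"
proof (cases "\<exists>g. S \<omega> = enat g \<and> g \<in> trg_groups SS \<and> Q \<omega>")
  case True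
  then obtain g0 where g0: "S \<omega> = enat g0" "g0 \<in> trg_groups SS" "Q \<omega>" by blast
  have "indicator (cell (enat g) True) \<omega> * (Yg g \<omega> t - Yinf \<omega> t)
      = (if g = g0 then Yg g \<omega> t - Yinf \<omega> t else 0)" for g
    using g0 \<omega> by (auto simp: cell_def)
  then show ?thesis
    using g0 finite_trg_groups[OF finite_SS] by (auto simp: Yobs_def)
next
  case False
  then have "indicator (cell (enat g) True) \<omega> = (0 :: real)" if "g \<in> trg_groups SS" for g
    using that \<omega> by (auto simp: cell_def)
  then show ?thesis using False by (auto simp: Yobs_def)
qed

lemma sum_mult_Yobs_eq:
  assumes \<omega>: "\<omega> \<in> space M"
  shows "(\<Sum>t\<in>{1..T}. r (S \<omega>) (Q \<omega>) t * Yobs SS S Q Yinf Yg \<omega> t)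
    = (\<Sum>t\<in>{1..T}. r (S \<omega>) (Q \<omega>) t * Yinf \<omega> t)
      + (\<Sum>g\<in>trg_groups SS. \<Sum>t\<in>{1..T}.
           r (enat g) True t * (indicator (cell (enat g) True) \<omega> * (Yg g \<omega> t - Yinf \<omega> t)))"
proof -
  have on_cell: "r (S \<omega>) (Q \<omega>) t * (indicator (cell (enat g) True) \<omega> * x)
      = r (enat g) True t * (indicator (cell (enat g) True) \<omega> * x)" for g t x
    using \<omega> by (auto simp: cell_def split: split_indicator)
  have "(\<Sum>t\<in>{1..T}. r (S \<omega>) (Q \<omega>) t * Yobs SS S Q Yinf Yg \<omega> t)
      = (\<Sum>t\<in>{1..T}. r (S \<omega>) (Q \<omega>) t * Yinf \<omega> t + (\<Sum>g\<in>trg_groups SS.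
           r (enat g) True t * (indicator (cell (enat g) True) \<omega> * (Yg g \<omega> t - Yinf \<omega> t))))"
    using \<omega> by (simp add: Yobs_eq_sum distrib_left sum_distrib_left on_cell)
  also have "\<dots> = (\<Sum>t\<in>{1..T}. r (S \<omega>) (Q \<omega>) t * Yinf \<omega> t)
      + (\<Sum>g\<in>trg_groups SS. \<Sum>t\<in>{1..T}.
           r (enat g) True t * (indicator (cell (enat g) True) \<omega> * (Yg g \<omega> t - Yinf \<omega> t)))"
    by (subst sum.swap) (simp add: sum.distrib)
  finally show ?thesis .
qed

end

section \<open>Fixed-effect least-squares fits\<close>

locale fe_ls_fit = cell_design +
  fixes E :: "int set" and X :: "'a \<Rightarrow> nat \<Rightarrow> real"
    and A :: "'a \<Rightarrow> real" and d :: "enat \<Rightarrow> nat \<Rightarrow> real" and h :: "bool \<Rightarrow> nat \<Rightarrow> real"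
    and b :: "int \<Rightarrow> real"
  assumes finite_E: "finite E"
    and measurable_X: "\<And>t. t \<in> {1..T} \<Longrightarrow> (\<lambda>\<omega>. X \<omega> t) \<in> borel_measurable M"
    and square_integrable_X: "\<And>t. t \<in> {1..T} \<Longrightarrow> integrable M (\<lambda>\<omega>. (X \<omega> t)\<^sup>2)"
    and measurable_A [measurable]: "A \<in> borel_measurable M"
    and ssr_minimal: "\<And>A' d' h' b'. A' \<in> borel_measurable M \<Longrightarrow>
      ssr_full M T E S Q X A d h b \<le> ssr_full M T E S Q X A' d' h' b'"
begin

definition fitted :: "enat \<Rightarrow> bool \<Rightarrow> nat \<Rightarrow> real" where
  "fitted s q t = d s t + h q t + (\<Sum>e\<in>E. b e * Rev_cell e s q t)"

definition resid :: "'a \<Rightarrow> nat \<Rightarrow> real" where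
  "resid \<omega> t = X \<omega> t - A \<omega> - fitted (S \<omega>) (Q \<omega>) t"

lemma ssr_full_resid: "ssr_full M T E S Q X A d h b = (\<integral>\<^sup>+\<omega>. ennreal (\<Sum>t\<in>{1..T}. (resid \<omega> t)\<^sup>2) \<partial>M)"
  by (simp add: ssr_full_def resid_def fitted_def Rev_eq_Rev_cell algebra_simps)

lemma measurable_resid: "t \<in> {1..T} \<Longrightarrow> (\<lambda>\<omega>. resid \<omega> t) \<in> borel_measurable M"
  unfolding resid_def
  using measurable_X borel_measurable_cell_function[of "\<lambda>s q. fitted s q t"] by measurable

lemma square_integrable_resid:
  assumes t: "t \<in> {1..T}"
  shows "integrable M (\<lambda>\<omega>. (resid \<omega> t)\<^sup>2)"
proof (rule integrableI_nonneg)
  show "(\<lambda>\<omega>. (resid \<omega> t)\<^sup>2) \<in> borel_measurable M" using measurable_resid[OF t] by measurable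
  have "(\<integral>\<^sup>+\<omega>. ennreal ((resid \<omega> t)\<^sup>2) \<partial>M) \<le> (\<integral>\<^sup>+\<omega>. ennreal (\<Sum>t\<in>{1..T}. (resid \<omega> t)\<^sup>2) \<partial>M)"
    by (intro nn_integral_mono ennreal_leI member_le_sum t) auto
  also have "\<dots> \<le> ssr_full M T E S Q X (\<lambda>_. 0) (\<lambda>_ _. 0) (\<lambda>_ _. 0) (\<lambda>_. 0)"
    unfolding ssr_full_resid[symmetric] by (rule ssr_minimal) simp
  also have "\<dots> = ennreal (\<integral>\<omega>. (\<Sum>t\<in>{1..T}. (X \<omega> t)\<^sup>2) \<partial>M)"
    unfolding ssr_full_def using square_integrable_X
    by (subst nn_integral_eq_integral) (auto intro!: sum_nonneg)
  finally show "(\<integral>\<^sup>+\<omega>. ennreal ((resid \<omega> t)\<^sup>2) \<partial>M) < \<infinity>"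
    using le_less_trans by fastforce
qed simp

lemma integrable_resid: "t \<in> {1..T} \<Longrightarrow> integrable M (\<lambda>\<omega>. resid \<omega> t)"
  using square_integrable_imp_integrable[OF measurable_resid square_integrable_resid] .

lemma resid_orthogonal_perturbation:
  assumes v_meas: "\<And>t. t \<in> {1..T} \<Longrightarrow> (\<lambda>\<omega>. v \<omega> t) \<in> borel_measurable M"
    and v_L2: "\<And>t. t \<in> {1..T} \<Longrightarrow> integrable M (\<lambda>\<omega>. (v \<omega> t)\<^sup>2)"
    and perturb: "\<And>\<epsilon>. \<exists>A' d' h' b'. A' \<in> borel_measurable M \<and>
      (\<forall>\<omega> t. X \<omega> t - A' \<omega> - d' (S \<omega>) t - h' (Q \<omega>) t - (\<Sum>e\<in>E. b' e * Rev S Q e \<omega> t)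
               = resid \<omega> t - \<epsilon> * v \<omega> t)"
  shows "(\<integral>\<omega>. (\<Sum>t\<in>{1..T}. resid \<omega> t * v \<omega> t) \<partial>M) = 0"
proof (rule least_squares_orthogonal[OF _ measurable_resid square_integrable_resid v_meas v_L2])
  fix \<epsilon>
  obtain A' d' h' b' where A': "A' \<in> borel_measurable M"
    and eq: "\<And>\<omega> t. X \<omega> t - A' \<omega> - d' (S \<omega>) t - h' (Q \<omega>) t - (\<Sum>e\<in>E. b' e * Rev S Q e \<omega> t)
               = resid \<omega> t - \<epsilon> * v \<omega> t"
    using perturb by blast
  have "(\<integral>\<^sup>+\<omega>. ennreal (\<Sum>t\<in>{1..T}. (resid \<omega> t)\<^sup>2) \<partial>M) = ssr_full M T E S Q X A d h b"
    by (rule ssr_full_resid[symmetric])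
  also have "\<dots> \<le> ssr_full M T E S Q X A' d' h' b'"
    using A' by (rule ssr_minimal)
  also have "\<dots> = (\<integral>\<^sup>+\<omega>. ennreal (\<Sum>t\<in>{1..T}. (resid \<omega> t - \<epsilon> * v \<omega> t)\<^sup>2) \<partial>M)"
    unfolding ssr_full_def eq ..
  finally show "(\<integral>\<^sup>+\<omega>. ennreal (\<Sum>t\<in>{1..T}. (resid \<omega> t)\<^sup>2) \<partial>M)
      \<le> (\<integral>\<^sup>+\<omega>. ennreal (\<Sum>t\<in>{1..T}. (resid \<omega> t - \<epsilon> * v \<omega> t)\<^sup>2) \<partial>M)" .
qed simp

lemma resid_orthogonal_regressors:
  assumes B_meas: "B \<in> borel_measurable M" and B_L2: "integrable M (\<lambda>\<omega>. (B \<omega>)\<^sup>2)"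
  shows "(\<integral>\<omega>. (\<Sum>t\<in>{1..T}. resid \<omega> t *
     (B \<omega> + (\<delta> (S \<omega>) t + \<eta> (Q \<omega>) t + (\<Sum>e\<in>E. c e * Rev_cell e (S \<omega>) (Q \<omega>) t)))) \<partial>M) = 0"
proof (rule resid_orthogonal_perturbation)
  let ?u = "\<lambda>s q t. \<delta> s t + \<eta> q t + (\<Sum>e\<in>E. c e * Rev_cell e s q t)"
  fix t
  show "(\<lambda>\<omega>. B \<omega> + ?u (S \<omega>) (Q \<omega>) t) \<in> borel_measurable M"
    using B_meas borel_measurable_cell_function[of "\<lambda>s q. ?u s q t"] by measurable
  show "integrable M (\<lambda>\<omega>. (B \<omega> + ?u (S \<omega>) (Q \<omega>) t)\<^sup>2)"
    by (rule square_integrable_add[OF B_meas borel_measurable_cell_function B_L2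
          square_integrable_cell_function])
  fix \<epsilon> :: real
  show "\<exists>A' d' h' b'. A' \<in> borel_measurable M \<and>
      (\<forall>\<omega> t. X \<omega> t - A' \<omega> - d' (S \<omega>) t - h' (Q \<omega>) t - (\<Sum>e\<in>E. b' e * Rev S Q e \<omega> t)
               = resid \<omega> t - \<epsilon> * (B \<omega> + ?u (S \<omega>) (Q \<omega>) t))"
    using B_meas
    by (intro exI[of _ "\<lambda>\<omega>. A \<omega> + \<epsilon> * B \<omega>"] exI[of _ "\<lambda>s t. d s t + \<epsilon> * \<delta> s t"]
          exI[of _ "\<lambda>q t. h q t + \<epsilon> * \<eta> q t"] exI[of _ "\<lambda>e. b e + \<epsilon> * c e"])
       (simp add: resid_def fitted_def Rev_eq_Rev_cell sum.distrib sum_distrib_left algebra_simps)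
qed

lemma resid_orthogonal_unit:
  assumes "B \<in> borel_measurable M" "integrable M (\<lambda>\<omega>. (B \<omega>)\<^sup>2)"
  shows "(\<integral>\<omega>. (\<Sum>t\<in>{1..T}. resid \<omega> t * B \<omega>) \<partial>M) = 0"
  using resid_orthogonal_regressors[OF assms, of "\<lambda>_ _. 0" "\<lambda>_ _. 0" "\<lambda>_. 0"] by simp

lemma resid_orthogonal_group_time: "(\<integral>\<omega>. (\<Sum>t\<in>{1..T}. resid \<omega> t * \<delta> (S \<omega>) t) \<partial>M) = 0"
  using resid_orthogonal_regressors[of "\<lambda>_. 0" \<delta> "\<lambda>_ _. 0" "\<lambda>_. 0"] by simp

lemma resid_orthogonal_elig_time: "(\<integral>\<omega>. (\<Sum>t\<in>{1..T}. resid \<omega> t * \<eta> (Q \<omega>) t) \<partial>M) = 0"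
  using resid_orthogonal_regressors[of "\<lambda>_. 0" "\<lambda>_ _. 0" \<eta> "\<lambda>_. 0"] by simp

lemma resid_orthogonal_fe_residual:
  assumes "e \<in> E" "fe_residual e r"
  shows "(\<integral>\<omega>. (\<Sum>t\<in>{1..T}. r (S \<omega>) (Q \<omega>) t * resid \<omega> t) \<partial>M) = 0"
proof -
  obtain \<delta> \<eta> a where r: "\<And>s q t. r s q t = Rev_cell e s q t - \<delta> s t - \<eta> q t - a s q"
    using assms(2) unfolding fe_residual_def by blast
  have "r s q t = - a s q + (- \<delta> s t + - \<eta> q t
      + (\<Sum>e'\<in>E. (if e' = e then 1 else 0) * Rev_cell e' s q t))" for s q t
    using assms(1) finite_E by (simp add: r if_distrib[of "\<lambda>x. x * _"] sum.delta')
  then show ?thesis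
    using resid_orthogonal_regressors[of "\<lambda>\<omega>. - a (S \<omega>) (Q \<omega>)" "\<lambda>s t. - \<delta> s t"
        "\<lambda>q t. - \<eta> q t" "\<lambda>e'. if e' = e then 1 else 0"]
      square_integrable_cell_function[of "\<lambda>s q. - a s q"]
    by (simp add: mult.commute)
qed

lemma sum_resid_AE: "AE \<omega> in M. (\<Sum>t\<in>{1..T}. resid \<omega> t) = 0"
proof -
  define s where "s \<omega> = (\<Sum>t\<in>{1..T}. resid \<omega> t)" for \<omega>
  have s_meas: "s \<in> borel_measurable M"
    unfolding s_def using measurable_resid by (intro borel_measurable_sum) simp
  have "(\<integral>\<omega>. (\<Sum>t\<in>{1..T}. resid \<omega> t * sgn (s \<omega>)) \<partial>M) = 0"
    using s_meas by (intro resid_orthogonal_unit square_integrable_bounded[where B = 1])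
      (auto simp: abs_sgn_eq)
  moreover have "(\<Sum>t\<in>{1..T}. resid \<omega> t * sgn (s \<omega>)) = \<bar>s \<omega>\<bar>" for \<omega>
    by (simp add: s_def abs_sgn flip: sum_distrib_right)
  moreover have "integrable M s" unfolding s_def using integrable_resid by auto
  ultimately have "AE \<omega> in M. \<bar>s \<omega>\<bar> = 0"
    using integral_nonneg_eq_0_iff_AE[of M "\<lambda>\<omega>. \<bar>s \<omega>\<bar>"] by auto
  then show ?thesis unfolding s_def by simp
qed

lemma resid_eq_time_demean_AE:
  assumes X: "\<And>\<omega> t. \<omega> \<in> space M \<Longrightarrow> X \<omega> t = x (S \<omega>) (Q \<omega>) t"
  shows "AE \<omega> in M. \<forall>t\<in>{1..T}. resid \<omega> t = time_demean T (\<lambda>s q t. x s q t - fitted s q t) (S \<omega>) (Q \<omega>) t"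
  using sum_resid_AE
proof (rule AE_mp, intro AE_I2 impI ballI)
  fix \<omega> t assume \<omega>: "\<omega> \<in> space M" and sum0: "(\<Sum>t\<in>{1..T}. resid \<omega> t) = 0" and t: "t \<in> {1..T}"
  have resid: "resid \<omega> t' = (x (S \<omega>) (Q \<omega>) t' - fitted (S \<omega>) (Q \<omega>) t') - A \<omega>" for t'
    using X[OF \<omega>] by (simp add: resid_def)
  have "(\<Sum>t'\<in>{1..T}. resid \<omega> t')
      = (\<Sum>t'\<in>{1..T}. x (S \<omega>) (Q \<omega>) t' - fitted (S \<omega>) (Q \<omega>) t') - real T * A \<omega>"
    unfolding resid by (simp add: sum_subtractf)
  then have "A \<omega> = (\<Sum>t'\<in>{1..T}. x (S \<omega>) (Q \<omega>) t' - fitted (S \<omega>) (Q \<omega>) t') / real T"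
    using sum0 t by (simp add: field_simps)
  then show "resid \<omega> t = time_demean T (\<lambda>s q t. x s q t - fitted s q t) (S \<omega>) (Q \<omega>) t"
    by (simp add: resid time_demean_def)
qed

lemma cell_inner_eq_integral_resid:
  assumes "AE \<omega> in M. \<forall>t\<in>{1..T}. resid \<omega> t = r (S \<omega>) (Q \<omega>) t"
  shows "cell_inner u r = (\<integral>\<omega>. (\<Sum>t\<in>{1..T}. u (S \<omega>) (Q \<omega>) t * resid \<omega> t) \<partial>M)"
proof -
  have "(\<integral>\<omega>. (\<Sum>t\<in>{1..T}. u (S \<omega>) (Q \<omega>) t * resid \<omega> t) \<partial>M)
      = (\<integral>\<omega>. (\<Sum>t\<in>{1..T}. u (S \<omega>) (Q \<omega>) t * r (S \<omega>) (Q \<omega>) t) \<partial>M)"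
  proof (rule Bochner_Integration.integral_cong_AE)
    show "(\<lambda>\<omega>. \<Sum>t\<in>{1..T}. u (S \<omega>) (Q \<omega>) t * resid \<omega> t) \<in> borel_measurable M"
      using measurable_resid borel_measurable_cell_function[of "\<lambda>s q. u s q t" for t]
      by (intro borel_measurable_sum borel_measurable_times) auto
    show "(\<lambda>\<omega>. \<Sum>t\<in>{1..T}. u (S \<omega>) (Q \<omega>) t * r (S \<omega>) (Q \<omega>) t) \<in> borel_measurable M"
      using borel_measurable_cell_function[of "\<lambda>s q. \<Sum>t\<in>{1..T}. u s q t * r s q t"] .
    show "AE \<omega> in M. (\<Sum>t\<in>{1..T}. u (S \<omega>) (Q \<omega>) t * resid \<omega> t)
        = (\<Sum>t\<in>{1..T}. u (S \<omega>) (Q \<omega>) t * r (S \<omega>) (Q \<omega>) t)"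
      using assms by eventually_elim simp
  qed
  then show ?thesis using integral_cell_inner[of u r] by simp
qed

lemma normal_equation:
  assumes "e \<in> E" "fe_residual e r"
  shows "(\<integral>\<omega>. (\<Sum>t\<in>{1..T}. r (S \<omega>) (Q \<omega>) t * X \<omega> t) \<partial>M)
    = (\<Sum>e'\<in>E. b e' * cell_inner r (Rev_cell e'))"
proof -
  have orth: "fe_orthogonal r" using assms(2) by (simp add: fe_residual_def)
  have split: "(\<Sum>t\<in>{1..T}. r (S \<omega>) (Q \<omega>) t * X \<omega> t)
      = (\<Sum>t\<in>{1..T}. r (S \<omega>) (Q \<omega>) t * resid \<omega> t)
        + (\<Sum>t\<in>{1..T}. r (S \<omega>) (Q \<omega>) t * fitted (S \<omega>) (Q \<omega>) t)" for \<omega>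
  proof -
    have "X \<omega> t = resid \<omega> t + A \<omega> + fitted (S \<omega>) (Q \<omega>) t" for t
      by (simp add: resid_def)
    then have "(\<Sum>t\<in>{1..T}. r (S \<omega>) (Q \<omega>) t * X \<omega> t)
        = (\<Sum>t\<in>{1..T}. r (S \<omega>) (Q \<omega>) t * resid \<omega> t + A \<omega> * r (S \<omega>) (Q \<omega>) t
            + r (S \<omega>) (Q \<omega>) t * fitted (S \<omega>) (Q \<omega>) t)"
      by (simp add: algebra_simps)
    also have "\<dots> = (\<Sum>t\<in>{1..T}. r (S \<omega>) (Q \<omega>) t * resid \<omega> t) + A \<omega> * (\<Sum>t\<in>{1..T}. r (S \<omega>) (Q \<omega>) t)
        + (\<Sum>t\<in>{1..T}. r (S \<omega>) (Q \<omega>) t * fitted (S \<omega>) (Q \<omega>) t)"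
      by (simp add: sum.distrib sum_distrib_left)
    finally
    show ?thesis using orth by (simp add: fe_orthogonal_def)
  qed
  have "(\<integral>\<omega>. (\<Sum>t\<in>{1..T}. r (S \<omega>) (Q \<omega>) t * X \<omega> t) \<partial>M)
      = (\<integral>\<omega>. (\<Sum>t\<in>{1..T}. r (S \<omega>) (Q \<omega>) t * resid \<omega> t) \<partial>M)
        + (\<integral>\<omega>. (\<Sum>t\<in>{1..T}. r (S \<omega>) (Q \<omega>) t * fitted (S \<omega>) (Q \<omega>) t) \<partial>M)"
    unfolding split using integrable_resid integrable_cell_function
    by (intro Bochner_Integration.integral_add Bochner_Integration.integrable_sum
          integrable_cell_function_mult) auto
  also have "\<dots> = cell_inner r fitted"
    using resid_orthogonal_fe_residual[OF assms] integral_cell_inner[of r fitted] by simp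
  also have "\<dots> = (\<Sum>e'\<in>E. b e' * cell_inner r (Rev_cell e'))"
  proof -
    have "cell_inner r (\<lambda>s q t. d s t + h q t) = 0"
      using orth by (rule cell_inner_fe_span[where a = "\<lambda>_ _. 0"]) simp
    then show ?thesis
      using cell_inner_add_right[of r "\<lambda>s q t. d s t + h q t"] unfolding fitted_def
      by (simp add: cell_inner_sum_right)
  qed
  finally show ?thesis .
qed

end

lemma (in cell_design) fe_ls_fit_of_fe_fit:
  assumes fit: "fe_fit M T S Q X G"
    and X_meas: "\<And>t. t \<in> {1..T} \<Longrightarrow> (\<lambda>\<omega>. X \<omega> t) \<in> borel_measurable M"
    and X_L2: "\<And>t. t \<in> {1..T} \<Longrightarrow> integrable M (\<lambda>\<omega>. (X \<omega> t)\<^sup>2)"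
  obtains A d h where "fe_ls_fit M T SS S Q {} X A d h (\<lambda>_. 0)"
    and "\<And>\<omega> t. G \<omega> t = A \<omega> + d (S \<omega>) t + h (Q \<omega>) t"
proof -
  obtain A d h where A: "A \<in> borel_measurable M"
    and G: "\<And>\<omega> t. G \<omega> t = A \<omega> + d (S \<omega>) t + h (Q \<omega>) t"
    and min: "\<And>A' d' h'. A' \<in> borel_measurable M \<Longrightarrow>
      (\<integral>\<^sup>+\<omega>. ennreal (\<Sum>t\<in>{1..T}. (X \<omega> t - G \<omega> t)\<^sup>2) \<partial>M)
      \<le> (\<integral>\<^sup>+\<omega>. ennreal (\<Sum>t\<in>{1..T}. (X \<omega> t - A' \<omega> - d' (S \<omega>) t - h' (Q \<omega>) t)\<^sup>2) \<partial>M)"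
    using fit unfolding fe_fit_def by blast
  have "fe_ls_fit M T SS S Q {} X A d h (\<lambda>_. 0)"
  proof unfold_locales
    fix A' :: "'a \<Rightarrow> real" and d' h' b' assume "A' \<in> borel_measurable M"
    then show "ssr_full M T {} S Q X A d h (\<lambda>_. 0) \<le> ssr_full M T {} S Q X A' d' h' b'"
      using min by (simp add: ssr_full_def G diff_diff_eq)
  qed (use A X_meas X_L2 in auto)
  then show thesis using G by (rule that)
qed

lemma (in cell_design) fe_fit_residual:
  assumes "fe_fit M T S Q (Rev S Q e) G"
  shows "\<exists>r. fe_residual e r \<and>
    (AE \<omega> in M. \<forall>t\<in>{1..T}. Rev S Q e \<omega> t - G \<omega> t = r (S \<omega>) (Q \<omega>) t) \<and>
    (\<forall>t\<in>{1..T}. (\<lambda>\<omega>. Rev S Q e \<omega> t - G \<omega> t) \<in> borel_measurable M)"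
proof -
  have "(\<lambda>\<omega>. Rev S Q e \<omega> t) \<in> borel_measurable M" "integrable M (\<lambda>\<omega>. (Rev S Q e \<omega> t)\<^sup>2)" for t
    unfolding Rev_eq_Rev_cell by (rule borel_measurable_cell_function square_integrable_cell_function)+
  then obtain A d h where fit: "fe_ls_fit M T SS S Q {} (Rev S Q e) A d h (\<lambda>_. 0)"
    and G: "\<And>\<omega> t. G \<omega> t = A \<omega> + d (S \<omega>) t + h (Q \<omega>) t"
    by (rule fe_ls_fit_of_fe_fit[OF assms]) auto
  interpret F: fe_ls_fit M T SS S Q "{}" "Rev S Q e" A d h "\<lambda>_. 0" by (fact fit)
  have resid: "F.resid \<omega> t = Rev S Q e \<omega> t - G \<omega> t" for \<omega> t
    by (simp add: F.resid_def F.fitted_def G)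
  define r where "r = time_demean T (\<lambda>s q t. Rev_cell e s q t - F.fitted s q t)"
  have AE: "AE \<omega> in M. \<forall>t\<in>{1..T}. F.resid \<omega> t = r (S \<omega>) (Q \<omega>) t"
    unfolding r_def by (rule F.resid_eq_time_demean_AE) (simp add: Rev_eq_Rev_cell)
  have "fe_orthogonal r"
    unfolding fe_orthogonal_def
  proof (intro conjI allI)
    show "(\<Sum>t\<in>{1..T}. r s q t) = 0" for s q
      unfolding r_def by (rule sum_time_demean)
    show "cell_inner r (\<lambda>s q t. \<delta> s t) = 0" for \<delta>
      using F.cell_inner_eq_integral_resid[OF AE, of "\<lambda>s q t. \<delta> s t"] F.resid_orthogonal_group_time[of \<delta>]
      by (simp add: cell_inner_commute mult.commute)
    show "cell_inner r (\<lambda>s q t. \<eta> q t) = 0" for \<eta>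
      using F.cell_inner_eq_integral_resid[OF AE, of "\<lambda>s q t. \<eta> q t"] F.resid_orthogonal_elig_time[of \<eta>]
      by (simp add: cell_inner_commute mult.commute)
  qed
  moreover have "\<exists>\<delta> \<eta> a. \<forall>s q t. r s q t = Rev_cell e s q t - \<delta> s t - \<eta> q t - a s q"
    by (intro exI[of _ d] exI[of _ h]
          exI[of _ "\<lambda>s q. (\<Sum>t'\<in>{1..T}. Rev_cell e s q t' - F.fitted s q t') / real T"])
       (simp add: r_def time_demean_def F.fitted_def)
  ultimately show ?thesis
    using AE F.measurable_resid by (auto simp: fe_residual_def resid)
qed

lemma (in cell_design) pop_coef_normal_equation:
  assumes "pop_coef M T E S Q X b" "finite E" "e \<in> E" "fe_residual e r"
    and "\<And>t. t \<in> {1..T} \<Longrightarrow> (\<lambda>\<omega>. X \<omega> t) \<in> borel_measurable M"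
    and "\<And>t. t \<in> {1..T} \<Longrightarrow> integrable M (\<lambda>\<omega>. (X \<omega> t)\<^sup>2)"
  shows "(\<integral>\<omega>. (\<Sum>t\<in>{1..T}. r (S \<omega>) (Q \<omega>) t * X \<omega> t) \<partial>M)
    = (\<Sum>e'\<in>E. b e' * cell_inner r (Rev_cell e'))"
proof -
  obtain A d h where "A \<in> borel_measurable M" and "\<And>A' d' h' b'. A' \<in> borel_measurable M \<Longrightarrow>
      ssr_full M T E S Q X A d h b \<le> ssr_full M T E S Q X A' d' h' b'"
    using assms(1) unfolding pop_coef_def by blast
  then interpret fe_ls_fit M T SS S Q E X A d h b
    using assms(2,5,6) by unfold_locales
  show ?thesis using normal_equation[OF assms(3,4)] .
qed

lemma (in cell_design) integral_fe_residual_product: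
  assumes "fe_orthogonal r" "fe_residual e' r'"
    and U: "AE \<omega> in M. \<forall>t\<in>{1..T}. U \<omega> t = r (S \<omega>) (Q \<omega>) t"
    and V: "AE \<omega> in M. \<forall>t\<in>{1..T}. V \<omega> t = r' (S \<omega>) (Q \<omega>) t"
    and U_meas: "\<forall>t\<in>{1..T}. (\<lambda>\<omega>. U \<omega> t) \<in> borel_measurable M"
    and V_meas: "\<forall>t\<in>{1..T}. (\<lambda>\<omega>. V \<omega> t) \<in> borel_measurable M"
  shows "(\<integral>\<omega>. (\<Sum>t\<in>{1..T}. U \<omega> t * V \<omega> t) \<partial>M) = cell_inner r (Rev_cell e')"
proof -
  have "(\<integral>\<omega>. (\<Sum>t\<in>{1..T}. U \<omega> t * V \<omega> t) \<partial>M)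
      = (\<integral>\<omega>. (\<Sum>t\<in>{1..T}. r (S \<omega>) (Q \<omega>) t * r' (S \<omega>) (Q \<omega>) t) \<partial>M)"
  proof (rule Bochner_Integration.integral_cong_AE)
    show "(\<lambda>\<omega>. \<Sum>t\<in>{1..T}. U \<omega> t * V \<omega> t) \<in> borel_measurable M"
      using U_meas V_meas by (intro borel_measurable_sum borel_measurable_times) auto
    show "(\<lambda>\<omega>. \<Sum>t\<in>{1..T}. r (S \<omega>) (Q \<omega>) t * r' (S \<omega>) (Q \<omega>) t) \<in> borel_measurable M"
      using borel_measurable_cell_function[of "\<lambda>s q. \<Sum>t\<in>{1..T}. r s q t * r' s q t"] .
    show "AE \<omega> in M. (\<Sum>t\<in>{1..T}. U \<omega> t * V \<omega> t)
        = (\<Sum>t\<in>{1..T}. r (S \<omega>) (Q \<omega>) t * r' (S \<omega>) (Q \<omega>) t)"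
      using U V by eventually_elim simp
  qed
  also have "\<dots> = cell_inner r r'"
    by (rule integral_cell_inner)
  also have "\<dots> = cell_inner r (Rev_cell e')"
    using assms(1,2) by (rule cell_inner_fe_residual)
  finally show ?thesis .
qed

lemma (in cell_design) residual_gram_nonsingular:
  assumes "\<exists>F. (\<forall>e\<in>E. fe_fit M T S Q (Rev S Q e) (F e)) \<and>
      nonsingular_on E (\<lambda>e e'. \<integral>\<omega>. (\<Sum>t\<in>{1..T}. (Rev S Q e \<omega> t - F e \<omega> t)
                                          * (Rev S Q e' \<omega> t - F e' \<omega> t)) \<partial>M)"
  obtains rr where "\<And>e. e \<in> E \<Longrightarrow> fe_residual e (rr e)"
    and "nonsingular_on E (\<lambda>e e'. cell_inner (rr e) (Rev_cell e'))"
proof -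
  obtain F where fit: "\<forall>e\<in>E. fe_fit M T S Q (Rev S Q e) (F e)"
    and ns: "nonsingular_on E (\<lambda>e e'. \<integral>\<omega>. (\<Sum>t\<in>{1..T}. (Rev S Q e \<omega> t - F e \<omega> t)
                                          * (Rev S Q e' \<omega> t - F e' \<omega> t)) \<partial>M)"
    using assms by blast
  have "\<forall>e\<in>E. \<exists>r. fe_residual e r \<and>
      (AE \<omega> in M. \<forall>t\<in>{1..T}. Rev S Q e \<omega> t - F e \<omega> t = r (S \<omega>) (Q \<omega>) t) \<and>
      (\<forall>t\<in>{1..T}. (\<lambda>\<omega>. Rev S Q e \<omega> t - F e \<omega> t) \<in> borel_measurable M)"
    using fit by (intro ballI fe_fit_residual) simp
  from bchoice[OF this] obtain rr where rr: "\<forall>e\<in>E. fe_residual e (rr e) \<and>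
      (AE \<omega> in M. \<forall>t\<in>{1..T}. Rev S Q e \<omega> t - F e \<omega> t = rr e (S \<omega>) (Q \<omega>) t) \<and>
      (\<forall>t\<in>{1..T}. (\<lambda>\<omega>. Rev S Q e \<omega> t - F e \<omega> t) \<in> borel_measurable M)" ..
  have "(\<integral>\<omega>. (\<Sum>t\<in>{1..T}. (Rev S Q e \<omega> t - F e \<omega> t) * (Rev S Q e' \<omega> t - F e' \<omega> t)) \<partial>M)
      = cell_inner (rr e) (Rev_cell e')" if "e \<in> E" "e' \<in> E" for e e'
    using rr[rule_format, OF that(1)] rr[rule_format, OF that(2)]
    by (intro integral_fe_residual_product[where r = "rr e" and r' = "rr e'"])
       (simp_all add: fe_residual_def)
  then have "nonsingular_on E (\<lambda>e e'. cell_inner (rr e) (Rev_cell e'))"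
    using ns by (subst nonsingular_on_cong) simp_all
  then show thesis using rr that by blast
qed

(* Without a never-treated group, sum_e (e + 1) R_e = Q (t - S + 1) is an eligibility-by-time
   effect plus a unit effect, so the residualised indicators would be linearly dependent. *)
lemma (in cell_design) never_treated_in_SS:
  assumes window: "\<forall>g\<in>trg_groups SS. \<forall>t\<in>{1..T}. - int L \<le> int t - int g \<and> int t - int g \<le> int K"
    and orth: "\<And>e. e \<in> ev_set L K \<Longrightarrow> fe_orthogonal (rr e)"
    and ns: "nonsingular_on (ev_set L K) (\<lambda>e e'. cell_inner (rr e) (Rev_cell e'))"
  shows "\<infinity> \<in> SS"
proof (rule ccontr)
  assume no_never: "\<infinity> \<notin> SS"
  define c :: "int \<Rightarrow> real" where "c e = real_of_int e + 1" for e
  have lin: "(\<Sum>e\<in>ev_set L K. c e * Rev_cell e s q t)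
      = (if q then real t else 0) + (if q then 1 - real (the_enat s) else 0)"
    if s: "s \<in> SS" and t: "t \<in> {1..T}" for s q t
  proof -
    obtain g where g: "s = enat g" using s no_never by (cases s) auto
    have "- int L \<le> int t - int g \<and> int t - int g \<le> int K"
      using window s t g by (simp add: trg_groups_def)
    then have "(if int t - int g \<in> ev_set L K then c (int t - int g) else 0) = real t - real g + 1"
      by (auto simp: ev_set_def c_def)
    moreover have "(\<Sum>e\<in>ev_set L K. c e * Rev_cell e s q t)
        = (\<Sum>e\<in>ev_set L K. if e = int t - int g then (if q then c e else 0) else 0)"
      by (intro sum.cong) (auto simp: Rev_cell_def g)
    moreover have "\<dots> = (if int t - int g \<in> ev_set L K then (if q then c (int t - int g) else 0) else 0)"
      by (simp add: finite_ev_set)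
    ultimately show ?thesis by (auto simp: g)
  qed
  have "(\<Sum>e'\<in>ev_set L K. cell_inner (rr e) (Rev_cell e') * c e') = 0" if e: "e \<in> ev_set L K" for e
  proof -
    have "(\<Sum>e'\<in>ev_set L K. cell_inner (rr e) (Rev_cell e') * c e')
        = cell_inner (rr e) (\<lambda>s q t. \<Sum>e'\<in>ev_set L K. c e' * Rev_cell e' s q t)"
      by (simp add: cell_inner_sum_right mult.commute)
    also have "\<dots> = 0"
      by (rule cell_inner_fe_span[OF orth[OF e], where \<delta> = "\<lambda>_ _. 0"]) (simp add: lin)
    finally show ?thesis .
  qed
  moreover have "0 \<in> ev_set L K" by (simp add: ev_set_def)
  ultimately have "c 0 = 0"
    using ns[unfolded nonsingular_on_def, THEN spec[of _ c]] by (simp add: mult.commute)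
  then show False by (simp add: c_def)
qed

section \<open>Identification under triple-difference parallel trends\<close>

locale ddd_design = cell_design +
  fixes L K :: nat and Yinf :: "'a \<Rightarrow> nat \<Rightarrow> real" and Yg :: "nat \<Rightarrow> 'a \<Rightarrow> nat \<Rightarrow> real"
  assumes measurable_Yinf: "\<And>t. (\<lambda>\<omega>. Yinf \<omega> t) \<in> borel_measurable M"
    and measurable_Yg: "\<And>g t. g \<in> trg_groups SS \<Longrightarrow> (\<lambda>\<omega>. Yg g \<omega> t) \<in> borel_measurable M"
    and square_integrable_Yinf: "\<And>t. t \<in> {1..T} \<Longrightarrow> integrable M (\<lambda>\<omega>. (Yinf \<omega> t)\<^sup>2)"
    and square_integrable_Yg: "\<And>g t. g \<in> trg_groups SS \<Longrightarrow> t \<in> {1..T} \<Longrightarrow> integrable M (\<lambda>\<omega>. (Yg g \<omega> t)\<^sup>2)"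
    and cell_prob_pos: "\<And>s q. s \<in> SS \<Longrightarrow> cell_prob s q > 0"
    and no_anticipation: "\<And>g \<omega> t. g \<in> trg_groups SS \<Longrightarrow> \<omega> \<in> space M \<Longrightarrow> 1 \<le> t \<and> t < g \<Longrightarrow>
      Yg g \<omega> t = Yinf \<omega> t"
    and window: "\<And>g t. g \<in> trg_groups SS \<Longrightarrow> t \<in> {1..T} \<Longrightarrow>
      - int L \<le> int t - int g \<and> int t - int g \<le> int K"
    and never_treated: "\<infinity> \<in> SS"
    and parallel_trends: "\<And>g t. g \<in> trg_groups SS \<Longrightarrow> t \<in> {2..T} \<Longrightarrow>
      Dtrend M S Q Yinf t (enat g) True - Dtrend M S Q Yinf t (enat g) False
      = Dtrend M S Q Yinf t \<infinity> True - Dtrend M S Q Yinf t \<infinity> False"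
begin

lemma integrable_Yinf: "t \<in> {1..T} \<Longrightarrow> integrable M (\<lambda>\<omega>. Yinf \<omega> t)"
  using square_integrable_imp_integrable[OF measurable_Yinf square_integrable_Yinf] .

lemma integrable_Yg: "g \<in> trg_groups SS \<Longrightarrow> t \<in> {1..T} \<Longrightarrow> integrable M (\<lambda>\<omega>. Yg g \<omega> t)"
  using square_integrable_imp_integrable[OF measurable_Yg square_integrable_Yg] .

lemma borel_measurable_Yobs: "(\<lambda>\<omega>. Yobs SS S Q Yinf Yg \<omega> t) \<in> borel_measurable M"
proof -
  have "(\<lambda>\<omega>. Yinf \<omega> t + (\<Sum>g\<in>trg_groups SS. indicator (cell (enat g) True) \<omega> * (Yg g \<omega> t - Yinf \<omega> t)))
      \<in> borel_measurable M"
    using measurable_Yinf measurable_Yg by measurable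
  then show ?thesis by (rule measurable_cong[THEN iffD1, rotated]) (simp add: Yobs_eq_sum)
qed

lemma square_integrable_Yobs:
  assumes t: "t \<in> {1..T}"
  shows "integrable M (\<lambda>\<omega>. (Yobs SS S Q Yinf Yg \<omega> t)\<^sup>2)"
proof (rule Bochner_Integration.integrable_bound)
  show "integrable M (\<lambda>\<omega>. (Yinf \<omega> t)\<^sup>2 + (\<Sum>g\<in>trg_groups SS. (Yg g \<omega> t)\<^sup>2))"
    using square_integrable_Yinf[OF t] square_integrable_Yg[OF _ t] by auto
  show "(\<lambda>\<omega>. (Yobs SS S Q Yinf Yg \<omega> t)\<^sup>2) \<in> borel_measurable M"
    using borel_measurable_Yobs by measurable
  show "AE \<omega> in M. norm ((Yobs SS S Q Yinf Yg \<omega> t)\<^sup>2)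
      \<le> norm ((Yinf \<omega> t)\<^sup>2 + (\<Sum>g\<in>trg_groups SS. (Yg g \<omega> t)\<^sup>2))"
  proof (rule AE_I2)
    fix \<omega>
    have nonneg: "0 \<le> (\<Sum>g\<in>trg_groups SS. (Yg g \<omega> t)\<^sup>2)" by (simp add: sum_nonneg)
    have "(Yobs SS S Q Yinf Yg \<omega> t)\<^sup>2 \<le> (Yinf \<omega> t)\<^sup>2 + (\<Sum>g\<in>trg_groups SS. (Yg g \<omega> t)\<^sup>2)"
    proof (cases "(\<exists>g. S \<omega> = enat g \<and> g \<in> trg_groups SS) \<and> Q \<omega>")
      case True
      then obtain g where g: "S \<omega> = enat g" "g \<in> trg_groups SS" by blast
      then have "(Yobs SS S Q Yinf Yg \<omega> t)\<^sup>2 = (Yg g \<omega> t)\<^sup>2" using True by (simp add: Yobs_def)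
      also have "\<dots> \<le> (\<Sum>g\<in>trg_groups SS. (Yg g \<omega> t)\<^sup>2)"
        using g(2) finite_trg_groups[OF finite_SS] by (intro member_le_sum) auto
      finally show ?thesis by (simp add: add_increasing)
    next
      case False
      then have "Yobs SS S Q Yinf Yg \<omega> t = Yinf \<omega> t" unfolding Yobs_def by (rule if_not_P)
      then show ?thesis using nonneg by simp
    qed
    then show "norm ((Yobs SS S Q Yinf Yg \<omega> t)\<^sup>2) \<le> norm ((Yinf \<omega> t)\<^sup>2 + (\<Sum>g\<in>trg_groups SS. (Yg g \<omega> t)\<^sup>2))"
      using nonneg by simp
  qed
qed

lemma untreated_moments_fe_span:
  obtains \<delta> \<eta> a where "\<And>s q t. s \<in> SS \<Longrightarrow> t \<in> {1..T} \<Longrightarrow>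
    cell_moment (\<lambda>\<omega>. Yinf \<omega> t) s q = cell_prob s q * (\<delta> s t + \<eta> q t + a s q)"
proof -
  define \<mu> where "\<mu> s q t = cell_moment (\<lambda>\<omega>. Yinf \<omega> t) s q / cell_prob s q" for s q t
  define D where "D s t = \<mu> s True t - \<mu> s False t" for s t
  have Dtrend: "Dtrend M S Q Yinf t s q = \<mu> s q t - \<mu> s q (t - 1)" if "t \<in> {2..T}" for s q t
  proof -
    have "t \<in> {1..T}" "t - 1 \<in> {1..T}" using that by auto
    then have "cell_moment (\<lambda>\<omega>. Yinf \<omega> t - Yinf \<omega> (t - 1)) s q
        = cell_moment (\<lambda>\<omega>. Yinf \<omega> t) s q - cell_moment (\<lambda>\<omega>. Yinf \<omega> (t - 1)) s q"
      unfolding cell_moment_def right_diff_distrib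
      by (intro Bochner_Integration.integral_diff integrable_indicator_cell_mult integrable_Yinf)
    then show ?thesis by (simp add: Dtrend_def cond_mean_cell \<mu>_def diff_divide_distrib)
  qed
  have D_gap: "D s t - D \<infinity> t = D s 1 - D \<infinity> 1" if s: "s \<in> SS" and t: "t \<in> {1..T}" for s t
  proof (rule eq_first_if_consecutive_eq[where f = "\<lambda>t. D s t - D \<infinity> t", OF _ t])
    fix t assume t: "t \<in> {2..T}"
    show "D s t - D \<infinity> t = D s (t - 1) - D \<infinity> (t - 1)"
    proof (cases s)
      case (enat g)
      then have "g \<in> trg_groups SS" using s by (simp add: trg_groups_def)
      from parallel_trends[OF this t] show ?thesis by (simp add: enat Dtrend[OF t] D_def)
    qed simp
  qed
  have "cell_moment (\<lambda>\<omega>. Yinf \<omega> t) s q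
      = cell_prob s q * (\<mu> s False t + (if q then D \<infinity> t else 0) + (if q then D s 1 - D \<infinity> 1 else 0))"
    if "s \<in> SS" "t \<in> {1..T}" for s q t
  proof -
    have "cell_moment (\<lambda>\<omega>. Yinf \<omega> t) s q = cell_prob s q * \<mu> s q t"
      using cell_prob_pos[OF that(1), of q] by (simp add: \<mu>_def)
    moreover have "\<mu> s q t = \<mu> s False t + (if q then D \<infinity> t else 0) + (if q then D s 1 - D \<infinity> 1 else 0)"
      using D_gap[OF that] by (cases q) (auto simp: D_def)
    ultimately show ?thesis by simp
  qed
  then show thesis by (rule that)
qed

lemma integral_untreated_fe_orthogonal:
  assumes "fe_orthogonal r"
  shows "(\<integral>\<omega>. (\<Sum>t\<in>{1..T}. r (S \<omega>) (Q \<omega>) t * Yinf \<omega> t) \<partial>M) = 0"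
proof -
  obtain \<delta> \<eta> a where moments: "\<And>s q t. s \<in> SS \<Longrightarrow> t \<in> {1..T} \<Longrightarrow>
      cell_moment (\<lambda>\<omega>. Yinf \<omega> t) s q = cell_prob s q * (\<delta> s t + \<eta> q t + a s q)"
    by (rule untreated_moments_fe_span) blast
  have "(\<integral>\<omega>. (\<Sum>t\<in>{1..T}. r (S \<omega>) (Q \<omega>) t * Yinf \<omega> t) \<partial>M) = cell_inner r (\<lambda>s q t. \<delta> s t + \<eta> q t + a s q)"
    by (rule integral_cell_function_times[OF integrable_Yinf moments])
  also have "\<dots> = 0"
    using assms by (rule cell_inner_fe_span) simp
  finally show ?thesis .
qed

lemma cell_moment_treatment_effect:
  assumes "g \<in> trg_groups SS"
  shows "cell_moment (\<lambda>\<omega>. Yg g \<omega> t - Yinf \<omega> t) (enat g) True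
    = cell_prob (enat g) True * CATT M S Q Yinf Yg g (int t - int g)"
  using cell_prob_pos[of "enat g" True] cond_mean_cell[of "enat g" True] assms
  by (simp add: CATT_def trg_groups_def)

lemma integral_treatment_effects:
  "(\<integral>\<omega>. (\<Sum>g\<in>trg_groups SS. \<Sum>t\<in>{1..T}.
        x g t * (indicator (cell (enat g) True) \<omega> * (Yg g \<omega> t - Yinf \<omega> t))) \<partial>M)
    = (\<Sum>g\<in>trg_groups SS. cell_prob (enat g) True *
         (\<Sum>t\<in>{1..T}. x g t * CATT M S Q Yinf Yg g (int t - int g)))"
proof -
  have int: "integrable M (\<lambda>\<omega>. indicator (cell (enat g) True) \<omega> * (Yg g \<omega> t - Yinf \<omega> t))"
    if "g \<in> trg_groups SS" "t \<in> {1..T}" for g t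
    using that
    by (intro integrable_indicator_cell_mult Bochner_Integration.integrable_diff integrable_Yg integrable_Yinf)
  have "(\<integral>\<omega>. (\<Sum>g\<in>trg_groups SS. \<Sum>t\<in>{1..T}.
        x g t * (indicator (cell (enat g) True) \<omega> * (Yg g \<omega> t - Yinf \<omega> t))) \<partial>M)
      = (\<Sum>g\<in>trg_groups SS. \<integral>\<omega>. (\<Sum>t\<in>{1..T}.
        x g t * (indicator (cell (enat g) True) \<omega> * (Yg g \<omega> t - Yinf \<omega> t))) \<partial>M)"
    using int by (intro Bochner_Integration.integral_sum Bochner_Integration.integrable_sum
        integrable_mult_right) auto
  also have "\<dots> = (\<Sum>g\<in>trg_groups SS. \<Sum>t\<in>{1..T}.
        x g t * cell_moment (\<lambda>\<omega>. Yg g \<omega> t - Yinf \<omega> t) (enat g) True)"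
    using int unfolding cell_moment_def
    by (intro sum.cong refl) (simp add: Bochner_Integration.integral_sum integrable_mult_right)
  finally show ?thesis
    by (simp add: cell_moment_treatment_effect sum_distrib_left mult_ac)
qed

lemma integral_Yobs_fe_orthogonal:
  assumes "fe_orthogonal r"
  shows "(\<integral>\<omega>. (\<Sum>t\<in>{1..T}. r (S \<omega>) (Q \<omega>) t * Yobs SS S Q Yinf Yg \<omega> t) \<partial>M)
    = (\<Sum>g\<in>trg_groups SS. cell_prob (enat g) True *
         (\<Sum>t\<in>{1..T}. r (enat g) True t * CATT M S Q Yinf Yg g (int t - int g)))"
proof -
  have "(\<integral>\<omega>. (\<Sum>t\<in>{1..T}. r (S \<omega>) (Q \<omega>) t * Yobs SS S Q Yinf Yg \<omega> t) \<partial>M)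
      = (\<integral>\<omega>. (\<Sum>t\<in>{1..T}. r (S \<omega>) (Q \<omega>) t * Yinf \<omega> t) \<partial>M)
        + (\<integral>\<omega>. (\<Sum>g\<in>trg_groups SS. \<Sum>t\<in>{1..T}.
             r (enat g) True t * (indicator (cell (enat g) True) \<omega> * (Yg g \<omega> t - Yinf \<omega> t))) \<partial>M)"
  proof -
    have "(\<integral>\<omega>. (\<Sum>t\<in>{1..T}. r (S \<omega>) (Q \<omega>) t * Yobs SS S Q Yinf Yg \<omega> t) \<partial>M)
        = (\<integral>\<omega>. (\<Sum>t\<in>{1..T}. r (S \<omega>) (Q \<omega>) t * Yinf \<omega> t) + (\<Sum>g\<in>trg_groups SS. \<Sum>t\<in>{1..T}.
             r (enat g) True t * (indicator (cell (enat g) True) \<omega> * (Yg g \<omega> t - Yinf \<omega> t))) \<partial>M)"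
      by (intro Bochner_Integration.integral_cong refl sum_mult_Yobs_eq)
    then show ?thesis
      by (simp only:, intro Bochner_Integration.integral_add Bochner_Integration.integrable_sum
          integrable_cell_function_mult integrable_mult_right integrable_indicator_cell_mult
          Bochner_Integration.integrable_diff integrable_Yg integrable_Yinf) auto
  qed
  then show ?thesis
    unfolding integral_untreated_fe_orthogonal[OF assms] integral_treatment_effects by simp
qed

lemma treated_contrast:
  assumes "fe_orthogonal r"
  shows "(\<integral>\<omega>. (\<Sum>t\<in>{1..T}. r (S \<omega>) (Q \<omega>) t * Yobs SS S Q Yinf Yg \<omega> t) \<partial>M)
    = (\<Sum>g\<in>trg_groups SS. \<Sum>l\<in>ev_set L K. CATT M S Q Yinf Yg g l *
         (\<integral>\<omega>. (\<Sum>t\<in>{1..T}. r (S \<omega>) (Q \<omega>) t * Rgl S Q g l \<omega> t) \<partial>M))"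
proof -
  have "(\<Sum>l\<in>ev_set L K. CATT M S Q Yinf Yg g l *
         (\<integral>\<omega>. (\<Sum>t\<in>{1..T}. r (S \<omega>) (Q \<omega>) t * Rgl S Q g l \<omega> t) \<partial>M))
      = cell_prob (enat g) True * (\<Sum>t\<in>{1..T}. r (enat g) True t * CATT M S Q Yinf Yg g (int t - int g))"
    if g: "g \<in> trg_groups SS" for g
  proof -
    have "enat g \<in> SS" using g by (simp add: trg_groups_def)
    then have "(\<Sum>l\<in>ev_set L K. CATT M S Q Yinf Yg g l *
         (\<integral>\<omega>. (\<Sum>t\<in>{1..T}. r (S \<omega>) (Q \<omega>) t * Rgl S Q g l \<omega> t) \<partial>M))
      = (\<Sum>l\<in>ev_set L K. CATT M S Q Yinf Yg g l * (cell_prob (enat g) True *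
         (\<Sum>t\<in>{1..T}. r (enat g) True t * (if int t = int g + l then 1 else 0))))"
      by (simp only: integral_Rgl)
    also have "\<dots> = cell_prob (enat g) True * (\<Sum>l\<in>ev_set L K. CATT M S Q Yinf Yg g l *
         (\<Sum>t\<in>{1..T}. r (enat g) True t * (if int t = int g + l then 1 else 0)))"
      by (simp add: sum_distrib_left mult_ac)
    also have "\<dots> = cell_prob (enat g) True * (\<Sum>t\<in>{1..T}. r (enat g) True t * CATT M S Q Yinf Yg g (int t - int g))"
      using sum_event_times_CATT[where Yg = Yg and Yinf = Yinf, OF no_anticipation[OF g] window[OF g]] by simp
    finally show ?thesis .
  qed
  then show ?thesis using integral_Yobs_fe_orthogonal[OF assms] by simp
qed

lemma fe_residual_moment_identity:
  assumes alpha: "pop_coef M T (ev_set L K) S Q (Yobs SS S Q Yinf Yg) \<alpha>"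
    and omega: "\<forall>g\<in>trg_groups SS. \<forall>l\<in>ev_set L K. pop_coef M T (ev_set L K) S Q (Rgl S Q g l) (\<omega> g l)"
    and e: "e \<in> ev_set L K" and r: "fe_residual e r"
  shows "(\<Sum>e'\<in>ev_set L K. \<alpha> e' * cell_inner r (Rev_cell e'))
    = (\<Sum>g\<in>trg_groups SS. \<Sum>l\<in>ev_set L K. CATT M S Q Yinf Yg g l *
         (\<Sum>e'\<in>ev_set L K. \<omega> g l e' * cell_inner r (Rev_cell e')))"
proof -
  have "(\<Sum>e'\<in>ev_set L K. \<alpha> e' * cell_inner r (Rev_cell e'))
      = (\<integral>\<omega>. (\<Sum>t\<in>{1..T}. r (S \<omega>) (Q \<omega>) t * Yobs SS S Q Yinf Yg \<omega> t) \<partial>M)"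
    by (rule pop_coef_normal_equation[OF alpha finite_ev_set e r borel_measurable_Yobs
          square_integrable_Yobs, symmetric])
  also have "\<dots> = (\<Sum>g\<in>trg_groups SS. \<Sum>l\<in>ev_set L K. CATT M S Q Yinf Yg g l *
       (\<integral>\<omega>. (\<Sum>t\<in>{1..T}. r (S \<omega>) (Q \<omega>) t * Rgl S Q g l \<omega> t) \<partial>M))"
    using r by (intro treated_contrast) (simp add: fe_residual_def)
  also have "\<dots> = (\<Sum>g\<in>trg_groups SS. \<Sum>l\<in>ev_set L K. CATT M S Q Yinf Yg g l *
       (\<Sum>e'\<in>ev_set L K. \<omega> g l e' * cell_inner r (Rev_cell e')))"
    using omega by (intro sum.cong refl arg_cong2[where f = "(*)"] pop_coef_normal_equation[OF _
        finite_ev_set e r borel_measurable_Rgl square_integrable_Rgl]) auto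
  finally show ?thesis .
qed

end

lemma (in cell_design) ddd_designI:
  assumes "\<forall>t. (\<lambda>\<omega>. Yinf \<omega> t) \<in> borel_measurable M"
    and "\<forall>g\<in>trg_groups SS. \<forall>t. (\<lambda>\<omega>. Yg g \<omega> t) \<in> borel_measurable M"
    and "\<forall>t\<in>{1..T}. integrable M (\<lambda>\<omega>. (Yinf \<omega> t)\<^sup>2)"
    and "\<forall>g\<in>trg_groups SS. \<forall>t\<in>{1..T}. integrable M (\<lambda>\<omega>. (Yg g \<omega> t)\<^sup>2)"
    and cells_pos: "\<forall>s\<in>SS. \<forall>q. measure M {\<omega>\<in>space M. S \<omega> = s \<and> Q \<omega> = q} > 0"
    and "\<forall>g\<in>trg_groups SS. \<forall>\<omega>\<in>space M. \<forall>t. 1 \<le> t \<and> t < g \<longrightarrow> Yg g \<omega> t = Yinf \<omega> t"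
    and "\<forall>g\<in>trg_groups SS. \<forall>t\<in>{1..T}. - int L \<le> int t - int g \<and> int t - int g \<le> int K"
    and ddd_pct: "\<forall>g\<in>trg_groups SS. \<forall>gc\<in>SS. \<forall>t\<in>{2..T}. enat g < gc \<and> enat t \<le> gc \<longrightarrow>
      Dtrend M S Q Yinf t (enat g) True - Dtrend M S Q Yinf t (enat g) False
      = Dtrend M S Q Yinf t gc True - Dtrend M S Q Yinf t gc False"
    and never: "\<infinity> \<in> SS"
  shows "ddd_design M T SS S Q L K Yinf Yg"
proof unfold_locales
  show "cell_prob s q > 0" if "s \<in> SS" for s q
    using cells_pos that by (simp add: cell_prob_def cell_def)
  show "Dtrend M S Q Yinf t (enat g) True - Dtrend M S Q Yinf t (enat g) False
      = Dtrend M S Q Yinf t \<infinity> True - Dtrend M S Q Yinf t \<infinity> False"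
    if "g \<in> trg_groups SS" "t \<in> {2..T}" for g t
    using ddd_pct that never by simp
qed (use assms in auto)

theorem mainTheorem2:
  fixes M :: "'a measure" and T L K :: nat and SS :: "enat set"
    and S :: "'a \<Rightarrow> enat" and Q :: "'a \<Rightarrow> bool"
    and Yinf :: "'a \<Rightarrow> nat \<Rightarrow> real" and Yg :: "nat \<Rightarrow> 'a \<Rightarrow> nat \<Rightarrow> real"
  assumes ps: "prob_space M"
    and SS_sub: "SS \<subseteq> enat ` {2..T} \<union> {\<infinity>}"
    and S_meas: "S \<in> measurable M (count_space UNIV)"
    and Q_meas: "Q \<in> measurable M (count_space UNIV)"
    and S_range: "\<forall>\<omega>\<in>space M. S \<omega> \<in> SS"
    and Yinf_meas: "\<forall>t. (\<lambda>\<omega>. Yinf \<omega> t) \<in> borel_measurable M"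
    and Yg_meas: "\<forall>g\<in>trg_groups SS. \<forall>t. (\<lambda>\<omega>. Yg g \<omega> t) \<in> borel_measurable M"
    and Yinf_L2: "\<forall>t\<in>{1..T}. integrable M (\<lambda>\<omega>. (Yinf \<omega> t)\<^sup>2)"
    and Yg_L2: "\<forall>g\<in>trg_groups SS. \<forall>t\<in>{1..T}. integrable M (\<lambda>\<omega>. (Yg g \<omega> t)\<^sup>2)"
    and no_anticip: "\<forall>g\<in>trg_groups SS. \<forall>\<omega>\<in>space M. \<forall>t. 1 \<le> t \<and> t < g \<longrightarrow> Yg g \<omega> t = Yinf \<omega> t"
    and cells_pos: "\<forall>s\<in>SS. \<forall>q. measure M {\<omega>\<in>space M. S \<omega> = s \<and> Q \<omega> = q} > 0"
    and window: "\<forall>g\<in>trg_groups SS. \<forall>t\<in>{1..T}.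
                   - int L \<le> int t - int g \<and> int t - int g \<le> int K"
    and gram: "\<exists>F. (\<forall>e\<in>ev_set L K. fe_fit M T S Q (Rev S Q e) (F e)) \<and>
                 nonsingular_on (ev_set L K)
                   (\<lambda>e e'. \<integral>\<omega>. (\<Sum>t\<in>{1..T}. (Rev S Q e \<omega> t - F e \<omega> t)
                                          * (Rev S Q e' \<omega> t - F e' \<omega> t)) \<partial>M)"
    and ddd_pct: "\<forall>g\<in>trg_groups SS. \<forall>gc\<in>SS. \<forall>t\<in>{2..T}. enat g < gc \<and> enat t \<le> gc \<longrightarrow>
                   Dtrend M S Q Yinf t (enat g) True - Dtrend M S Q Yinf t (enat g) False
                   = Dtrend M S Q Yinf t gc True - Dtrend M S Q Yinf t gc False"
    and alpha: "pop_coef M T (ev_set L K) S Q (Yobs SS S Q Yinf Yg) \<alpha>"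
    and omega: "\<forall>g\<in>trg_groups SS. \<forall>l\<in>ev_set L K.
                   pop_coef M T (ev_set L K) S Q (Rgl S Q g l) (\<omega> g l)"
    and j: "j \<in> ev_set L K"
  shows "\<alpha> j = (\<Sum>g\<in>trg_groups SS. \<Sum>l\<in>ev_set L K. \<omega> g l j * CATT M S Q Yinf Yg g l)"
proof -
  have "finite SS" using SS_sub by (rule finite_subset) simp
  interpret cell_design M T SS S Q
    by (intro cell_design.intro cell_design_axioms.intro ps \<open>finite SS\<close> S_meas Q_meas
        S_range[rule_format])
  obtain rr where rr: "\<And>e. e \<in> ev_set L K \<Longrightarrow> fe_residual e (rr e)"
    and ns: "nonsingular_on (ev_set L K) (\<lambda>e e'. cell_inner (rr e) (Rev_cell e'))"
    using gram by (rule residual_gram_nonsingular) blast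
  have "\<infinity> \<in> SS"
    using window rr ns by (intro never_treated_in_SS[where rr = rr]) (auto simp: fe_residual_def)
  then interpret ddd_design M T SS S Q L K Yinf Yg
    by (intro ddd_designI Yinf_meas Yg_meas Yinf_L2 Yg_L2 cells_pos no_anticip window ddd_pct)
  have "\<alpha> j = (\<Sum>g\<in>trg_groups SS. \<Sum>l\<in>ev_set L K. CATT M S Q Yinf Yg g l * \<omega> g l j)"
    using ns j by (rule nonsingular_on_imp_eq) (rule fe_residual_moment_identity[OF alpha omega _ rr])
  then show ?thesis by (simp add: mult.commute)
qed

end
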